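(* Let $\nu_\epsilon$ be an $\epsilon$-BP from $a^*$ to $b^*$ in a domain $D^*$ of the $\epsilon$-brick-wall lattice, with vertices $X^\epsilon_0,X^\epsilon_1,\ldots$. Conditioned on the event that $X^\epsilon_j$ is an unblocked vertex of $\nu_\epsilon$, writing $V=X^\epsilon_j$, $\mathbb{P}[X^\epsilon_{j+1}=P_V\mid X^\epsilon_j\text{ unblocked}]=\tfrac12$ and $\mathbb{P}[X^\epsilon_{j+1}=V',X^\epsilon_{j+2}=Q_V\mid X^\epsilon_j\text{ unblocked}]=\mathbb{P}[X^\epsilon_{j+1}=V',X^\epsilon_{j+2}=R_V\mid X^\epsilon_j\text{ unblocked}]=\tfrac14.$
   Context: Brick-wall lattice of mesh $\delta$: replace each hexagon of the hexagonal lattice of mesh $\delta$ by a rectangle of width $\sqrt3\delta$ so that the rectangles tessellate the plane, each rectangle having six vertices (four corners and one interior point on each of its top and bottom sides); label rows by $\mathbb{Z}$ with row $0$ containing the real line. For small $\epsilon>0$ the $\epsilon$-brick-wall lattice is obtained by shifting even rows left by $(\sqrt3/2-\epsilon)\delta/2$ and odd rows right by the same amount (for $\epsilon<0$ it is the reflection across the $y$-axis of the $(-\epsilon)$-brick-wall lattice); it is topologically equivalent to the hexagonal lattice and contains edges of Euclidean length $\epsilon\delta$. Let $\Phi_\epsilon$ be the map sending hexagonal lattice vertices bijectively to $\epsilon$-brick-wall vertices (realizing this equivalence; images of paths lie within $3\delta$ of the original path). If $\nu$ is the critical site percolation exploration path on the hexagonal lattice of mesh $\delta$ in a domain $D$ from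 $a$ to $b$, then $\nu_\epsilon=\Phi_\epsilon(\nu)$ is the $\epsilon$-BP in $D^*=\Phi_\epsilon(D)$ from $a^*=\Phi_\epsilon(a)$ to $b^*=\Phi_\epsilon(b)$. For a simple lattice path from $a^*$ to an interior vertex $V$ whose last edge does not have length $\epsilon\delta$: $V'$ is the neighbour of $V$ joined by an edge of length $\epsilon\delta$, $V''$ is the second-last vertex of the path, $P_V$ is the remaining neighbour of $V$, and $Q_V,R_V$ are the neighbours of $V'$ other than $V$, with the edge $V'R_V$ parallel to $V''V$ and the edge $V'Q_V$ perpendicular to $V''V$. The path leaves an unblocked path to $b^*$ if it can be continued to a simple path from $a^*$ to $b^*$ in $D^*$ in each of the three ways: next vertex $P_V$; next vertices $V',Q_V$; next vertices $V',R_V$. A vertex $X^\epsilon_j$ of $\nu_\epsilon$ is unblocked if the subpath of $\nu_\epsilon$ from $a^*$ to $X^\epsilon_j$ leaves an unblocked path to $b^*$. *)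

theory Defs
  imports Complex_Main "HOL-Library.FuncSet"
begin

text \<open>
Vertices are pairs (x, r) of integers: r indexes the horizontal line (the common
boundary line of brick rows r-1 and r), x indexes the vertices along that line
from left to right.
Brick (face) (x, r), for x + r even, is the rectangle with bottom side on line r
from (x, r) to (x+2, r) and top side on line r+1 from (x, r+1) to (x+2, r+1); it has
six vertices (four corners, one interior point on each horizontal side).
Putting vertex (x, r) at the planar point (x, r) gives a planar embedding of the
brick-wall lattice, used below only to decide left/right of directed edges and
horizontal/vertical directions.  In the epsilon-brick-wall lattice (epsilon > 0) the
horizontal edges of each line alternately have length epsilon*delta and
(sqrt 3 - epsilon)*delta; here the short edges are those joining (2k, r) and
(2k+1, r).  (The short edge at a corner lies on alternating sides on alternating
lines, in accordance with the alternating row shifts.)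
\<close>

type_synonym vtx = "int \<times> int"
type_synonym face = "int \<times> int"

definition bw_adj :: "vtx \<Rightarrow> vtx \<Rightarrow> bool" where
  "bw_adj p q \<longleftrightarrow>
     (snd p = snd q \<and> \<bar>fst p - fst q\<bar> = 1) \<or>
     (fst p = fst q \<and> \<bar>snd p - snd q\<bar> = 1 \<and> even (fst p + min (snd p) (snd q)))"

text \<open>Edge of length epsilon*delta.\<close>
definition bw_short :: "vtx \<Rightarrow> vtx \<Rightarrow> bool" where
  "bw_short p q \<longleftrightarrow> snd p = snd q \<and> \<bar>fst p - fst q\<bar> = 1 \<and> even (min (fst p) (fst q))"

definition edge_vertical :: "vtx \<Rightarrow> vtx \<Rightarrow> bool" where
  "edge_vertical p q \<longleftrightarrow> fst p = fst q"

definition Faces :: "face set" where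
  "Faces = {f. even (fst f + snd f)}"

definition face_verts :: "face \<Rightarrow> vtx set" where
  "face_verts f = (case f of (x, r) \<Rightarrow>
     {(x, r), (x+1, r), (x+2, r), (x, r+1), (x+1, r+1), (x+2, r+1)})"

definition faces_at :: "vtx \<Rightarrow> face set" where
  "faces_at v = {f \<in> Faces. v \<in> face_verts f}"

text \<open>Face lying to the left / right of the directed edge p \<rightarrow> q (sign of the cross
  product of q - p with (twice the) face centre minus 2p).\<close>
definition cross_side :: "vtx \<Rightarrow> vtx \<Rightarrow> face \<Rightarrow> int" where
  "cross_side p q f =
     (fst q - fst p) * (2 * snd f + 1 - 2 * snd p) - (snd q - snd p) * (2 * fst f + 2 - 2 * fst p)"

definition left_face :: "vtx \<Rightarrow> vtx \<Rightarrow> face" where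
  "left_face p q = (THE f. f \<in> Faces \<and> p \<in> face_verts f \<and> q \<in> face_verts f \<and> cross_side p q f > 0)"

definition right_face :: "vtx \<Rightarrow> vtx \<Rightarrow> face" where
  "right_face p q = (THE f. f \<in> Faces \<and> p \<in> face_verts f \<and> q \<in> face_verts f \<and> cross_side p q f < 0)"

text \<open>Two faces are adjacent if they share an edge (equivalently two vertices).\<close>
definition face_adj :: "face \<Rightarrow> face \<Rightarrow> bool" where
  "face_adj f g \<longleftrightarrow> f \<noteq> g \<and> card (face_verts f \<inter> face_verts g) \<ge> 2"

definition face_connected :: "face set \<Rightarrow> bool" where
  "face_connected S \<longleftrightarrow>
     (\<forall>f\<in>S. \<forall>g\<in>S. (f, g) \<in> (Restr {(h, k). face_adj h k} S)\<^sup>*)"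

text \<open>A discrete (simply connected) domain: a finite nonempty edge-connected set of
  hexagons whose complement is edge-connected.\<close>
definition lattice_domain :: "face set \<Rightarrow> bool" where
  "lattice_domain D \<longleftrightarrow> D \<subseteq> Faces \<and> finite D \<and> D \<noteq> {} \<and>
     face_connected D \<and> face_connected (Faces - D)"

definition bdry_faces :: "face set \<Rightarrow> face set" where
  "bdry_faces D = {f \<in> Faces - D. \<exists>g\<in>D. face_verts f \<inter> face_verts g \<noteq> {}}"

text \<open>Boundary conditions for the exploration path from a to b: the colour function bc
  (True = black) on the hexagons outside D is such that the black boundary hexagons
  form one connected arc and the white boundary hexagons form one connected arc, and
  the two arcs meet exactly at the boundary vertices a and b (each of a, b is incident
  to a black and to a white boundary hexagon).\<close>
definition boundary_condition :: "face set \<Rightarrow> (face \<Rightarrow> bool) \<Rightarrow> vtx \<Rightarrow> vtx \<Rightarrow> bool" where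
  "boundary_condition D bc a b \<longleftrightarrow> a \<noteq> b \<and>
     face_connected {f \<in> bdry_faces D. bc f} \<and>
     face_connected {f \<in> bdry_faces D. \<not> bc f} \<and>
     (\<forall>v\<in>{a, b}. faces_at v \<inter> D \<noteq> {} \<and>
        (\<exists>f\<in>faces_at v \<inter> bdry_faces D. bc f) \<and>
        (\<exists>f\<in>faces_at v \<inter> bdry_faces D. \<not> bc f))"

text \<open>Sample space of critical site percolation on the hexagons of D
  (uniform measure = independent fair colours); colours outside D from bc.\<close>
definition configs :: "face set \<Rightarrow> (face \<Rightarrow> bool) set" where
  "configs D = PiE D (\<lambda>_. UNIV)"

definition colouring :: "face set \<Rightarrow> (face \<Rightarrow> bool) \<Rightarrow> (face \<Rightarrow> bool) \<Rightarrow> face \<Rightarrow> bool" where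
  "colouring D bc \<omega> f = (if f \<in> D then \<omega> f else bc f)"

definition cond_prob_unif :: "'a set \<Rightarrow> ('a \<Rightarrow> bool) \<Rightarrow> ('a \<Rightarrow> bool) \<Rightarrow> real" where
  "cond_prob_unif \<Omega> E C = real (card {\<omega>\<in>\<Omega>. E \<omega> \<and> C \<omega>}) / real (card {\<omega>\<in>\<Omega>. C \<omega>})"

text \<open>The exploration path keeps black hexagons on its left and white on its right:
  each step goes along the unique new edge with a black hexagon on its left and a white
  one on its right.  X 0 = a.\<close>
fun explore :: "(face \<Rightarrow> bool) \<Rightarrow> vtx \<Rightarrow> nat \<Rightarrow> vtx" where
  "explore c a 0 = a"
| "explore c a (Suc 0) =
     (THE w. bw_adj a w \<and> c (left_face a w) \<and> \<not> c (right_face a w))"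
| "explore c a (Suc (Suc n)) =
     (let u = explore c a n; v = explore c a (Suc n) in
      THE w. bw_adj v w \<and> w \<noteq> u \<and> c (left_face v w) \<and> \<not> c (right_face v w))"

definition D_edge :: "face set \<Rightarrow> vtx \<Rightarrow> vtx \<Rightarrow> bool" where
  "D_edge D p q \<longleftrightarrow> bw_adj p q \<and> (\<exists>f\<in>D. p \<in> face_verts f \<and> q \<in> face_verts f)"

definition lattice_path_in :: "face set \<Rightarrow> vtx list \<Rightarrow> bool" where
  "lattice_path_in D ps \<longleftrightarrow> ps \<noteq> [] \<and> (\<forall>i. Suc i < length ps \<longrightarrow> D_edge D (ps ! i) (ps ! Suc i))"

definition simple_path_from_to :: "face set \<Rightarrow> vtx \<Rightarrow> vtx \<Rightarrow> vtx list \<Rightarrow> bool" where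
  "simple_path_from_to D a b ps \<longleftrightarrow>
     lattice_path_in D ps \<and> distinct ps \<and> hd ps = a \<and> last ps = b"

definition interior_vertex :: "face set \<Rightarrow> vtx \<Rightarrow> bool" where
  "interior_vertex D v \<longleftrightarrow> faces_at v \<subseteq> D"

definition Vprime :: "vtx \<Rightarrow> vtx" where
  "Vprime v = (THE w. bw_adj v w \<and> bw_short v w)"

text \<open>P_V : remaining neighbour of V (given the second-last vertex V'').\<close>
definition P_of :: "vtx \<Rightarrow> vtx \<Rightarrow> vtx" where
  "P_of v2 v = (THE w. bw_adj v w \<and> w \<noteq> v2 \<and> w \<noteq> Vprime v)"

definition R_of :: "vtx \<Rightarrow> vtx \<Rightarrow> vtx" where
  "R_of v2 v = (THE w. bw_adj (Vprime v) w \<and> w \<noteq> v \<and>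
                  (edge_vertical (Vprime v) w \<longleftrightarrow> edge_vertical v2 v))"

definition Q_of :: "vtx \<Rightarrow> vtx \<Rightarrow> vtx" where
  "Q_of v2 v = (THE w. bw_adj (Vprime v) w \<and> w \<noteq> v \<and>
                  (edge_vertical (Vprime v) w \<longleftrightarrow> \<not> edge_vertical v2 v))"

definition leaves_unblocked :: "face set \<Rightarrow> vtx \<Rightarrow> vtx \<Rightarrow> vtx list \<Rightarrow> bool" where
  "leaves_unblocked D a b gam \<longleftrightarrow>
     length gam \<ge> 2 \<and> hd gam = a \<and> distinct gam \<and> lattice_path_in D gam \<and>
     (let v = last gam; v2 = last (butlast gam) in
       interior_vertex D v \<and> \<not> bw_short v2 v \<and>
       (\<forall>cont \<in> {[P_of v2 v], [Vprime v, Q_of v2 v], [Vprime v, R_of v2 v]}.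
          \<exists>rest. simple_path_from_to D a b (gam @ cont @ rest)))"

definition unblocked_at :: "face set \<Rightarrow> vtx \<Rightarrow> vtx \<Rightarrow> (face \<Rightarrow> bool) \<Rightarrow> nat \<Rightarrow> bool" where
  "unblocked_at D a b c j \<longleftrightarrow> leaves_unblocked D a b (map (explore c a) [0..<Suc j])"

end

theory Submission
  imports Defs
begin

text \<open>The exploration path turns right at its current vertex when the third face there (the one not
  on the edge just traversed) is black, and left when it is white. If X_j = V is unblocked, the
  third face F at V and the third face G at V' after the short edge are hexagons of D not touched
  by the path so far. Otherwise a closed walk, formed by part of the path together with a walk around
  F (or a walk through the complement of D back to a), would traverse the last edge exactly once;
  by a parity version of the Jordan curve theorem the two faces of that edge would then lie on
  different sides of the walk, so they could not both be joined to b by paths avoiding it, although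
  the three continuations in the definition of an unblocked vertex provide such paths. Hence the
  event that X_j is unblocked does not depend on the colours of F and G. Flipping the colour of F
  swaps the steps to P_V and to V', and, given the step to V', flipping the colour of G swaps the
  steps to Q_V and R_V; counting configurations gives 1/2, 1/4 and 1/4.\<close>

section \<open>Local geometry of the brick-wall lattice\<close>

lemma bw_adj_iff:
  "bw_adj (x, r) q \<longleftrightarrow> q = (x - 1, r) \<or> q = (x + 1, r) \<or> q = (x, if even (x + r) then r + 1 else r - 1)"
  by (cases q) (auto simp: bw_adj_def abs_if split: if_splits; presburger)

lemma bw_adj_sym: "bw_adj p q \<Longrightarrow> bw_adj q p"
  by (auto simp: bw_adj_def min.commute abs_minus_commute)

lemma face_verts_mem:
  "(a, b) \<in> face_verts (x, r) \<longleftrightarrow> (b = r \<or> b = r + 1) \<and> (a = x \<or> a = x + 1 \<or> a = x + 2)"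
  by (auto simp: face_verts_def)

lemma faces_at_eq:
  "faces_at (x, r) =
     (if even (x + r) then {(x - 2, r), (x, r), (x - 1, r - 1)} else {(x - 1, r), (x - 2, r - 1), (x, r - 1)})"
  unfolding faces_at_def Faces_def face_verts_def
  by (rule set_eqI, case_tac xa) (auto split: if_splits)

definition lface :: "vtx \<Rightarrow> vtx \<Rightarrow> face" where
 "lface p q = (case p of (x, r) \<Rightarrow>
   if q = (x + 1, r) then (if even (x + r) then (x, r) else (x - 1, r))
   else if q = (x - 1, r) then (if even (x + r) then (x - 1, r - 1) else (x - 2, r - 1))
   else if q = (x, r + 1) then (x - 2, r)
   else (x, r - 1))"

definition rface :: "vtx \<Rightarrow> vtx \<Rightarrow> face" where
 "rface p q = (case p of (x, r) \<Rightarrow>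
   if q = (x + 1, r) then (if even (x + r) then (x - 1, r - 1) else (x, r - 1))
   else if q = (x - 1, r) then (if even (x + r) then (x - 2, r) else (x - 1, r))
   else if q = (x, r + 1) then (x, r)
   else (x - 2, r - 1))"

lemma mem_faces_at_iff: "f \<in> Faces \<and> v \<in> face_verts f \<longleftrightarrow> f \<in> faces_at v"
  by (simp add: faces_at_def)

lemma lface_iff:
  assumes "bw_adj p q"
  shows "(f \<in> Faces \<and> p \<in> face_verts f \<and> q \<in> face_verts f \<and> cross_side p q f > 0) \<longleftrightarrow> f = lface p q"
proof -
  obtain x r where p: "p = (x, r)" by (cases p)
  show ?thesis using assms unfolding p
    apply (subst conj_assoc[symmetric], subst mem_faces_at_iff, subst faces_at_eq)
    apply (cases f, cases "even (x + r)")
     apply (simp_all add: bw_adj_iff)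
     apply (elim disjE; auto simp: lface_def face_verts_mem cross_side_def)+
    done
qed

lemma rface_iff:
  assumes "bw_adj p q"
  shows "(f \<in> Faces \<and> p \<in> face_verts f \<and> q \<in> face_verts f \<and> cross_side p q f < 0) \<longleftrightarrow> f = rface p q"
proof -
  obtain x r where p: "p = (x, r)" by (cases p)
  show ?thesis using assms unfolding p
    apply (subst conj_assoc[symmetric], subst mem_faces_at_iff, subst faces_at_eq)
    apply (cases f, cases "even (x + r)")
     apply (simp_all add: bw_adj_iff)
     apply (elim disjE; auto simp: rface_def face_verts_mem cross_side_def)+
    done
qed

lemma edge_faces_iff:
  assumes "bw_adj p q"
  shows "(f \<in> Faces \<and> p \<in> face_verts f \<and> q \<in> face_verts f) \<longleftrightarrow> f = lface p q \<or> f = rface p q"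
proof -
  obtain x r where p: "p = (x, r)" by (cases p)
  show ?thesis using assms unfolding p
    apply (subst conj_assoc[symmetric], subst mem_faces_at_iff, subst faces_at_eq)
    apply (cases f, cases "even (x + r)")
     apply (simp_all add: bw_adj_iff)
     apply (elim disjE; auto simp: lface_def rface_def face_verts_mem)+
    done
qed

lemma left_face_eq: "bw_adj p q \<Longrightarrow> left_face p q = lface p q"
  unfolding left_face_def using lface_iff by (simp add: conj_assoc)

lemma right_face_eq: "bw_adj p q \<Longrightarrow> right_face p q = rface p q"
  unfolding right_face_def using rface_iff by (simp add: conj_assoc)

lemma lface_at_ends: "bw_adj p q \<Longrightarrow> lface p q \<in> faces_at p \<and> lface p q \<in> faces_at q"
  using edge_faces_iff[of p q "lface p q"] by (auto simp: faces_at_def)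

lemma rface_at_ends: "bw_adj p q \<Longrightarrow> rface p q \<in> faces_at p \<and> rface p q \<in> faces_at q"
  using edge_faces_iff[of p q "rface p q"] by (auto simp: faces_at_def)

lemma lface_neq_rface: "bw_adj p q \<Longrightarrow> lface p q \<noteq> rface p q"
  by (cases p) (auto simp: bw_adj_iff lface_def rface_def split: if_splits)

lemma lface_reverse: "bw_adj p q \<Longrightarrow> lface q p = rface p q"
  by (cases p) (auto simp: bw_adj_iff lface_def rface_def split: if_splits)

lemma rface_reverse: "bw_adj p q \<Longrightarrow> rface q p = lface p q"
  by (cases p) (auto simp: bw_adj_iff lface_def rface_def split: if_splits)

lemma turn_exists:
  assumes "bw_adj u v"
  shows "\<exists>wL wR F. F \<in> Faces \<and> faces_at v = {lface u v, rface u v, F} \<and> F \<noteq> lface u v \<and> F \<noteq> rface u v \<and>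
     u \<notin> face_verts F \<and> (\<forall>w. bw_adj v w \<and> w \<noteq> u \<longleftrightarrow> w = wL \<or> w = wR) \<and> wL \<noteq> wR \<and>
     lface v wL = lface u v \<and> rface v wL = F \<and> lface v wR = F \<and> rface v wR = rface u v"
proof -
  obtain x r where v: "v = (x, r)" by (cases v)
  have "bw_adj v u" using assms bw_adj_sym by blast
  hence u: "u = (x - 1, r) \<or> u = (x + 1, r) \<or> u = (x, if even (x + r) then r + 1 else r - 1)"
    unfolding v bw_adj_iff .
  show ?thesis
  proof (cases "even (x + r)")
    case True
    have parities: "even (x - 1 + r) = False" "even (x + 1 + r) = False" "even (x + (r + 1)) = False"
      "even (x - 2 + r) = True" "even (x + 1 + (r + 1)) = True" "even (x - 1 + (r + 1)) = True"
      "even (x - 1 + (r - 1)) = True"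
      using True by presburger+
    note simps = v lface_def rface_def faces_at_eq bw_adj_iff face_verts_def Faces_def parities
    from u True consider "u = (x - 1, r)" | "u = (x + 1, r)" | "u = (x, r + 1)" by auto
    then show ?thesis
    proof cases
      case 1
      show ?thesis
        apply (rule exI[of _ "(x, r + 1)"], rule exI[of _ "(x + 1, r)"], rule exI[of _ "(x, r)"])
        using True by (auto simp: 1 simps)
    next
      case 2
      show ?thesis
        apply (rule exI[of _ "(x - 1, r)"], rule exI[of _ "(x, r + 1)"], rule exI[of _ "(x - 2, r)"])
        using True by (auto simp: 2 simps)
    next
      case 3
      show ?thesis
        apply (rule exI[of _ "(x + 1, r)"], rule exI[of _ "(x - 1, r)"], rule exI[of _ "(x - 1, r - 1)"])
        using True by (auto simp: 3 simps)
    qed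
  next
    case False
    have parities: "even (x - 1 + r) = True" "even (x + 1 + r) = True" "even (x + (r - 1)) = True"
      "even (x - 2 + (r - 1)) = True" "even (x + 1 + (r - 1)) = False" "even (x - 1 + (r - 1)) = False"
      "even (x + r) = False"
      using False by presburger+
    note simps = v lface_def rface_def faces_at_eq bw_adj_iff face_verts_def Faces_def parities
    from u False consider "u = (x - 1, r)" | "u = (x + 1, r)" | "u = (x, r - 1)" by auto
    then show ?thesis
    proof cases
      case 1
      show ?thesis
        apply (rule exI[of _ "(x + 1, r)"], rule exI[of _ "(x, r - 1)"], rule exI[of _ "(x, r - 1)"])
        using False by (auto simp: 1 simps)
    next
      case 2
      show ?thesis
        apply (rule exI[of _ "(x, r - 1)"], rule exI[of _ "(x - 1, r)"], rule exI[of _ "(x - 2, r - 1)"])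
        using False by (auto simp: 2 simps)
    next
      case 3
      show ?thesis
        apply (rule exI[of _ "(x - 1, r)"], rule exI[of _ "(x + 1, r)"], rule exI[of _ "(x - 1, r)"])
        using False by (auto simp: 3 simps)
    qed
  qed
qed

definition third_face :: "vtx \<Rightarrow> vtx \<Rightarrow> face" where
  "third_face u v = (THE F. F \<in> faces_at v \<and> u \<notin> face_verts F)"

definition turn_left :: "vtx \<Rightarrow> vtx \<Rightarrow> vtx" where
  "turn_left u v = (THE w. bw_adj v w \<and> w \<noteq> u \<and> lface v w = lface u v)"

definition turn_right :: "vtx \<Rightarrow> vtx \<Rightarrow> vtx" where
  "turn_right u v = (THE w. bw_adj v w \<and> w \<noteq> u \<and> rface v w = rface u v)"

lemma turn_properties:
  assumes uv: "bw_adj u v"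
  obtains "third_face u v \<in> Faces" "faces_at v = {lface u v, rface u v, third_face u v}"
    "third_face u v \<noteq> lface u v" "third_face u v \<noteq> rface u v" "u \<notin> face_verts (third_face u v)"
    "\<And>w. bw_adj v w \<and> w \<noteq> u \<longleftrightarrow> w = turn_left u v \<or> w = turn_right u v"
    "turn_left u v \<noteq> turn_right u v"
    "lface v (turn_left u v) = lface u v" "rface v (turn_left u v) = third_face u v"
    "lface v (turn_right u v) = third_face u v" "rface v (turn_right u v) = rface u v"
proof -
  obtain wL wR F where F: "F \<in> Faces" "faces_at v = {lface u v, rface u v, F}" "F \<noteq> lface u v"
    "F \<noteq> rface u v" "u \<notin> face_verts F" and nbrs: "\<And>w. bw_adj v w \<and> w \<noteq> u \<longleftrightarrow> w = wL \<or> w = wR"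
    and w: "wL \<noteq> wR" "lface v wL = lface u v" "rface v wL = F" "lface v wR = F" "rface v wR = rface u v"
    using turn_exists[OF uv] by blast
  have "u \<in> face_verts (lface u v)" "u \<in> face_verts (rface u v)"
    using lface_at_ends[OF uv] rface_at_ends[OF uv] by (auto simp: faces_at_def)
  then have "third_face u v = F"
    unfolding third_face_def using F by (intro the_equality) auto
  moreover have "turn_left u v = wL"
    unfolding turn_left_def using nbrs w F(3) by (intro the_equality) (blast, metis)
  moreover have "turn_right u v = wR"
    unfolding turn_right_def using nbrs w F(4) by (intro the_equality) (blast, metis)
  ultimately show thesis
    using that F nbrs w by simp
qed

lemma
  assumes "bw_adj u v"
  shows third_face_in_Faces: "third_face u v \<in> Faces"
    and faces_at_turn: "faces_at v = {lface u v, rface u v, third_face u v}"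
    and third_face_neq_lface: "third_face u v \<noteq> lface u v"
    and third_face_neq_rface: "third_face u v \<noteq> rface u v"
    and third_face_avoids_tail: "u \<notin> face_verts (third_face u v)"
    and turn_nbrs_iff: "bw_adj v w \<and> w \<noteq> u \<longleftrightarrow> w = turn_left u v \<or> w = turn_right u v"
    and turn_left_neq_right: "turn_left u v \<noteq> turn_right u v"
    and lface_turn_left: "lface v (turn_left u v) = lface u v"
    and rface_turn_left: "rface v (turn_left u v) = third_face u v"
    and lface_turn_right: "lface v (turn_right u v) = third_face u v"
    and rface_turn_right: "rface v (turn_right u v) = rface u v"
  using turn_properties[OF assms] by metis+

lemma turn_adj:
  assumes "bw_adj u v"
  shows "bw_adj v (turn_left u v)" "bw_adj v (turn_right u v)" "turn_left u v \<noteq> u" "turn_right u v \<noteq> u"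
  using turn_nbrs_iff[OF assms] by blast+

lemmas turn_facts = third_face_in_Faces faces_at_turn third_face_neq_lface third_face_neq_rface
  third_face_avoids_tail turn_nbrs_iff turn_left_neq_right lface_turn_left rface_turn_left
  lface_turn_right rface_turn_right turn_adj

lemma two_faces_at_edge:
  assumes "h1 \<in> faces_at w" "h2 \<in> faces_at w" "h1 \<noteq> h2"
  obtains z where "bw_adj w z" "{h1, h2} = {lface w z, rface w z}"
proof -
  obtain x r where w: "w = (x, r)" by (cases w)
  define u where "u = (x + 1, r)"
  have wu: "bw_adj w u" unfolding u_def w by (simp add: bw_adj_iff)
  then have uw: "bw_adj u w" by (rule bw_adj_sym)
  have "h1 \<in> {lface u w, rface u w, third_face u w}" "h2 \<in> {lface u w, rface u w, third_face u w}"
    using assms(1,2) faces_at_turn[OF uw] by auto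
  then have "{h1, h2} = {lface u w, rface u w} \<or> {h1, h2} = {lface u w, third_face u w} \<or>
      {h1, h2} = {third_face u w, rface u w}"
    using assms(3) by (elim insertE emptyE) (simp_all add: insert_commute)
  moreover have "{lface w u, rface w u} = {lface u w, rface u w}"
    using lface_reverse[OF uw] rface_reverse[OF uw] by auto
  moreover have "{lface w (turn_left u w), rface w (turn_left u w)} = {lface u w, third_face u w}"
    using lface_turn_left[OF uw] rface_turn_left[OF uw] by simp
  moreover have "{lface w (turn_right u w), rface w (turn_right u w)} = {third_face u w, rface u w}"
    using lface_turn_right[OF uw] rface_turn_right[OF uw] by simp
  ultimately show thesis
    using that wu turn_adj(1,2)[OF uw] by metis
qed

fun walk_steps :: "'a list \<Rightarrow> ('a \<times> 'a) list" where
  "walk_steps (x # y # zs) = (x, y) # walk_steps (y # zs)"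
| "walk_steps _ = []"

lemma walk_steps_zip: "walk_steps xs = zip xs (tl xs)"
  by (induction xs rule: walk_steps.induct) auto

lemma walk_steps_nth: "set (walk_steps xs) = {(xs ! i, xs ! Suc i) | i. Suc i < length xs}"
  unfolding walk_steps_zip set_zip by (auto simp: nth_tl)

lemma walk_steps_mem: "st \<in> set (walk_steps W) \<Longrightarrow> fst st \<in> set W \<and> snd st \<in> set W"
  by (induction W rule: walk_steps.induct) auto

lemma walk_steps_drop_subset: "set (walk_steps (drop k xs)) \<subseteq> set (walk_steps xs)"
  unfolding walk_steps_nth by auto

lemma walk_steps_append:
  "xs \<noteq> [] \<Longrightarrow> walk_steps (xs @ ys) = walk_steps xs @ (if ys = [] then [] else (last xs, hd ys) # walk_steps ys)"
proof (induction xs)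
  case (Cons x xs)
  then show ?case by (cases xs; cases ys) auto
qed simp

lemma walk_steps_join:
  "xs \<noteq> [] \<Longrightarrow> ys \<noteq> [] \<Longrightarrow> last xs = hd ys \<Longrightarrow> walk_steps (xs @ tl ys) = walk_steps xs @ walk_steps ys"
  by (cases ys; cases "tl ys") (auto simp: walk_steps_append)

lemma last_join: "xs \<noteq> [] \<Longrightarrow> ys \<noteq> [] \<Longrightarrow> last xs = hd ys \<Longrightarrow> last (xs @ tl ys) = last ys"
  by (cases ys; cases "tl ys") (auto simp: last_tl)

lemma even_switches_iff:
  "xs \<noteq> [] \<Longrightarrow>
    even (length (filter (\<lambda>st. (fst st \<in> S) \<noteq> (snd st \<in> S)) (walk_steps xs))) \<longleftrightarrow> (hd xs \<in> S \<longleftrightarrow> last xs \<in> S)"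
  by (induction xs rule: walk_steps.induct) auto

lemma length_filter_disj:
  "(\<And>x. \<not> (P x \<and> Q x)) \<Longrightarrow> length (filter (\<lambda>x. P x \<or> Q x) xs) = length (filter P xs) + length (filter Q xs)"
  by (induction xs) auto

definition traversals :: "'a list \<Rightarrow> 'a \<Rightarrow> 'a \<Rightarrow> nat" where
  "traversals W p q = length (filter (\<lambda>st. st = (p, q) \<or> st = (q, p)) (walk_steps W))"

lemma traversals_sym: "traversals W p q = traversals W q p"
  unfolding traversals_def by meson

lemma traversals_zero: "(\<And>st. st \<in> set (walk_steps W) \<Longrightarrow> st \<noteq> (p, q) \<and> st \<noteq> (q, p)) \<Longrightarrow> traversals W p q = 0"
  unfolding traversals_def by (auto simp: filter_empty_conv)

lemma traversals_join:
  "xs \<noteq> [] \<Longrightarrow> ys \<noteq> [] \<Longrightarrow> last xs = hd ys \<Longrightarrow> traversals (xs @ tl ys) p q = traversals xs p q + traversals ys p q"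
  unfolding traversals_def by (simp add: walk_steps_join)

lemma traversals_last: "distinct (ys @ [u, v]) \<Longrightarrow> traversals (ys @ [u, v]) u v = 1"
proof -
  assume d: "distinct (ys @ [u, v])"
  have "walk_steps (ys @ [u, v]) = walk_steps (ys @ [u]) @ [(u, v)]"
    using walk_steps_append[of "ys @ [u]" "[v]"] by simp
  moreover have "traversals (ys @ [u]) u v = 0"
    using d by (intro traversals_zero) (auto dest: walk_steps_mem)
  ultimately show ?thesis
    unfolding traversals_def by simp
qed

definition walk_adj :: "vtx list \<Rightarrow> bool" where
  "walk_adj W \<longleftrightarrow> (\<forall>st\<in>set (walk_steps W). bw_adj (fst st) (snd st))"

definition closed_walk :: "vtx list \<Rightarrow> bool" where
  "closed_walk W \<longleftrightarrow> W \<noteq> [] \<and> hd W = last W \<and> walk_adj W"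

lemma walk_adj_nth: "walk_adj xs \<longleftrightarrow> (\<forall>i. Suc i < length xs \<longrightarrow> bw_adj (xs ! i) (xs ! Suc i))"
  unfolding walk_adj_def walk_steps_nth
  apply (intro iffI allI impI ballI)
  subgoal for i by (drule bspec[of _ _ "(xs ! i, xs ! Suc i)"]) auto
  subgoal by auto
  done

lemma walk_adj_drop: "walk_adj xs \<Longrightarrow> walk_adj (drop k xs)"
  unfolding walk_adj_nth by auto

lemma walk_adj_take: "walk_adj xs \<Longrightarrow> walk_adj (take k xs)"
  unfolding walk_adj_nth by auto

lemma walk_adj_join:
  "xs \<noteq> [] \<Longrightarrow> ys \<noteq> [] \<Longrightarrow> last xs = hd ys \<Longrightarrow> walk_adj xs \<Longrightarrow> walk_adj ys \<Longrightarrow> walk_adj (xs @ tl ys)"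
  unfolding walk_adj_def by (auto simp: walk_steps_join)

definition walk_between :: "vtx \<Rightarrow> vtx \<Rightarrow> vtx list \<Rightarrow> bool" where
  "walk_between s t ws \<longleftrightarrow> ws \<noteq> [] \<and> hd ws = s \<and> last ws = t \<and> walk_adj ws"

lemma walk_between_join:
  "walk_between s m xs \<Longrightarrow> walk_between m t ys \<Longrightarrow> walk_between s t (xs @ tl ys)"
  unfolding walk_between_def using walk_adj_join last_join by auto

lemma closed_walk_join:
  "walk_between s t xs \<Longrightarrow> walk_between t s ys \<Longrightarrow> closed_walk (xs @ tl ys)"
  using walk_between_join[of s t xs s ys] unfolding walk_between_def closed_walk_def by auto

section \<open>Inside parity of a face with respect to a closed walk\<close>

text \<open>A face (x, r) lies inside the closed walk W when the vertical ray going down from its centre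
  crosses W an odd number of times, i.e.\ W traverses an odd number of the horizontal edges
  (x + 1, r')--(x + 2, r') with r' \<le> r.\<close>

definition crosses_below :: "int \<Rightarrow> int \<Rightarrow> vtx \<times> vtx \<Rightarrow> bool" where
  "crosses_below k r st \<longleftrightarrow> snd (fst st) = snd (snd st) \<and> snd (fst st) \<le> r \<and>
      ((fst (fst st) = k \<and> fst (snd st) = k + 1) \<or> (fst (fst st) = k + 1 \<and> fst (snd st) = k))"

definition crossings_below :: "vtx list \<Rightarrow> int \<Rightarrow> int \<Rightarrow> nat" where
  "crossings_below W k r = length (filter (crosses_below k r) (walk_steps W))"

definition inside_parity :: "vtx list \<Rightarrow> face \<Rightarrow> bool" where
  "inside_parity W f = odd (crossings_below W (fst f + 1) (snd f))"

definition column_below :: "int \<Rightarrow> int \<Rightarrow> vtx set" where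
  "column_below k r = {(k, r') | r'. r' \<le> r}"

lemma column_switch_iff:
  assumes "bw_adj (fst st) (snd st)"
  shows "((fst st \<in> column_below k r) \<noteq> (snd st \<in> column_below k r)) \<longleftrightarrow>
     (crosses_below (k - 1) r st \<or> crosses_below k r st) \<or>
     (even (k + r) \<and> (st = ((k, r), (k, r + 1)) \<or> st = ((k, r + 1), (k, r))))"
proof -
  obtain a b c d where st: "st = ((a, b), (c, d))" by (metis prod.exhaust)
  have col: "(u, w) \<in> column_below k r \<longleftrightarrow> u = k \<and> w \<le> r" for u w by (auto simp: column_below_def)
  have "(c, d) = (a - 1, b) \<or> (c, d) = (a + 1, b) \<or> (c, d) = (a, if even (a + b) then b + 1 else b - 1)"
    using assms bw_adj_iff[of a b "(c, d)"] unfolding st by simp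
  then consider "c = a + 1" "d = b" | "c = a - 1" "d = b" | "even (a + b)" "c = a" "d = b + 1"
    | "odd (a + b)" "c = a" "d = b - 1"
    by (auto split: if_splits)
  then show ?thesis
  proof cases
    case 1
    then show ?thesis unfolding st crosses_below_def by (auto simp add: col)
  next
    case 2
    then show ?thesis unfolding st crosses_below_def by (auto simp add: col)
  next
    case 3
    have "a = k \<Longrightarrow> b \<le> r \<Longrightarrow> \<not> b + 1 \<le> r \<Longrightarrow> even (k + r)" using 3(1) by presburger
    then show ?thesis using 3 unfolding st crosses_below_def by (auto simp add: col)
  next
    case 4
    have "a = k \<Longrightarrow> b = r + 1 \<Longrightarrow> even (k + r)" using 4(1) by presburger
    then show ?thesis using 4 unfolding st crosses_below_def by (auto simp add: col)
  qed
qed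

text \<open>A closed walk enters and leaves the column below (k, r) equally often; the edges leaving
  the column are the horizontal ones counted by the crossings and, if (k, r) has its vertical
  edge going up, that edge.\<close>

lemma even_column_crossings:
  assumes "closed_walk W"
  shows "even (crossings_below W (k - 1) r + crossings_below W k r +
    (if even (k + r) then traversals W (k, r) (k, r + 1) else 0))"
proof -
  let ?S = "column_below k r"
  let ?A = "crosses_below (k - 1) r"
  let ?B = "crosses_below k r"
  let ?C = "\<lambda>st. even (k + r) \<and> (st = ((k, r), (k, r + 1)) \<or> st = ((k, r + 1), (k, r)))"
  have switches: "even (length (filter (\<lambda>st. (fst st \<in> ?S) \<noteq> (snd st \<in> ?S)) (walk_steps W)))"
    using assms even_switches_iff[of W ?S] unfolding closed_walk_def by simp
  have "filter (\<lambda>st. (fst st \<in> ?S) \<noteq> (snd st \<in> ?S)) (walk_steps W) =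
      filter (\<lambda>st. (?A st \<or> ?B st) \<or> ?C st) (walk_steps W)"
    by (rule filter_cong[OF refl])
      (use assms column_switch_iff in \<open>unfold closed_walk_def walk_adj_def, blast\<close>)
  moreover have d1: "\<not> ((?A st \<or> ?B st) \<and> ?C st)" and d2: "\<not> (?A st \<and> ?B st)" for st
    by (auto simp: crosses_below_def)
  moreover have "length (filter ?C (walk_steps W)) = (if even (k + r) then traversals W (k, r) (k, r + 1) else 0)"
    by (simp add: traversals_def)
  ultimately show ?thesis
    using switches length_filter_disj[of "\<lambda>st. ?A st \<or> ?B st" ?C, OF d1]
      length_filter_disj[of ?A ?B, OF d2]
    by (simp add: crossings_below_def)
qed

lemma crossings_below_split:
  "crossings_below W k r = crossings_below W k (r - 1) + traversals W (k, r) (k + 1, r)"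
proof -
  let ?A = "crosses_below k (r - 1)"
  let ?B = "\<lambda>st. st = ((k, r), (k + 1, r)) \<or> st = ((k + 1, r), (k, r))"
  have d: "\<not> (?A st \<and> ?B st)" for st by (auto simp: crosses_below_def)
  have "crosses_below k r = (\<lambda>st. ?A st \<or> ?B st)"
    by (rule ext) (auto simp: crosses_below_def)
  then show ?thesis
    unfolding crossings_below_def traversals_def using length_filter_disj[of ?A ?B, OF d] by simp
qed

lemma crossing_parity_horizontal_even:
  assumes "closed_walk W" "even (k + r)"
  shows "odd (crossings_below W (k + 1) r) \<noteq> odd (crossings_below W k (r - 1)) \<longleftrightarrow>
    odd (traversals W (k, r) (k + 1, r))"
proof -
  have "\<not> even (k + 1 + r)" using assms(2) by presburger
  then have "even (crossings_below W k r + crossings_below W (k + 1) r)"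
    using even_column_crossings[OF assms(1), of "k + 1" r] by simp
  then show ?thesis using crossings_below_split[of W k r] by presburger
qed

lemma crossing_parity_horizontal_odd:
  assumes "closed_walk W" "odd (k + r)"
  shows "odd (crossings_below W k r) \<noteq> odd (crossings_below W (k + 1) (r - 1)) \<longleftrightarrow>
    odd (traversals W (k, r) (k + 1, r))"
proof -
  have "\<not> even (k + 1 + (r - 1))" using assms(2) by presburger
  then have "even (crossings_below W k (r - 1) + crossings_below W (k + 1) (r - 1))"
    using even_column_crossings[OF assms(1), of "k + 1" "r - 1"] by simp
  then show ?thesis using crossings_below_split[of W k r] by presburger
qed

lemma crossing_parity_vertical:
  assumes "closed_walk W" "even (k + r)"
  shows "odd (crossings_below W (k - 1) r) \<noteq> odd (crossings_below W (k + 1) r) \<longleftrightarrow>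
    odd (traversals W (k, r) (k, r + 1))"
proof -
  have "\<not> even (k + 1 + r)" using assms(2) by presburger
  then have "even (crossings_below W k r + crossings_below W (k + 1) r)"
    using even_column_crossings[OF assms(1), of "k + 1" r] by simp
  moreover have "even (crossings_below W (k - 1) r + crossings_below W k r + traversals W (k, r) (k, r + 1))"
    using even_column_crossings[OF assms(1), of k r] assms(2) by simp
  ultimately show ?thesis by presburger
qed

lemma inside_parity_edge:
  assumes W: "closed_walk W" and pq: "bw_adj p q"
  shows "inside_parity W (lface p q) \<noteq> inside_parity W (rface p q) \<longleftrightarrow> odd (traversals W p q)"
proof -
  obtain x r where p: "p = (x, r)" by (cases p)
  have q: "q = (x - 1, r) \<or> q = (x + 1, r) \<or> q = (x, if even (x + r) then r + 1 else r - 1)"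
    using pq unfolding p bw_adj_iff .
  consider "even (x + r)" "q = (x + 1, r)" | "even (x + r)" "q = (x - 1, r)" | "even (x + r)" "q = (x, r + 1)"
    | "odd (x + r)" "q = (x + 1, r)" | "odd (x + r)" "q = (x - 1, r)" | "odd (x + r)" "q = (x, r - 1)"
    using q by (cases "even (x + r)") auto
  then show ?thesis
  proof cases
    case 1
    then have "lface p q = (x, r)" "rface p q = (x - 1, r - 1)" by (simp_all add: p lface_def rface_def)
    then show ?thesis
      unfolding inside_parity_def using crossing_parity_horizontal_even[OF W 1(1)] 1 p by simp
  next
    case 2
    have "odd (x - 1 + r)" using 2(1) by presburger
    from crossing_parity_horizontal_odd[OF W this] have
      "odd (crossings_below W (x - 1) r) \<noteq> odd (crossings_below W (x - 1 + 1) (r - 1)) \<longleftrightarrow>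
        odd (traversals W (x - 1, r) (x - 1 + 1, r))" .
    moreover have "lface p q = (x - 1, r - 1)" "rface p q = (x - 2, r)"
      using 2 by (simp_all add: p lface_def rface_def)
    ultimately show ?thesis
      unfolding inside_parity_def using traversals_sym[of W p q] 2 p by auto
  next
    case 3
    then have "lface p q = (x - 2, r)" "rface p q = (x, r)" by (simp_all add: p lface_def rface_def)
    then show ?thesis
      unfolding inside_parity_def using crossing_parity_vertical[OF W 3(1)] 3 p by auto
  next
    case 4
    then have "lface p q = (x - 1, r)" "rface p q = (x, r - 1)" by (simp_all add: p lface_def rface_def)
    then show ?thesis
      unfolding inside_parity_def using crossing_parity_horizontal_odd[OF W 4(1)] 4 p by simp
  next
    case 5
    have "even (x - 1 + r)" using 5(1) by presburger
    from crossing_parity_horizontal_even[OF W this] have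
      "odd (crossings_below W (x - 1 + 1) r) \<noteq> odd (crossings_below W (x - 1) (r - 1)) \<longleftrightarrow>
        odd (traversals W (x - 1, r) (x - 1 + 1, r))" .
    moreover have "lface p q = (x - 2, r - 1)" "rface p q = (x - 1, r)"
      using 5 by (simp_all add: p lface_def rface_def)
    ultimately show ?thesis
      unfolding inside_parity_def using traversals_sym[of W p q] 5 p by auto
  next
    case 6
    have "even (x + (r - 1))" using 6(1) by presburger
    from crossing_parity_vertical[OF W this] have
      "odd (crossings_below W (x - 1) (r - 1)) \<noteq> odd (crossings_below W (x + 1) (r - 1)) \<longleftrightarrow>
        odd (traversals W (x, r - 1) (x, r - 1 + 1))" .
    moreover have "lface p q = (x, r - 1)" "rface p q = (x - 2, r - 1)"
      using 6 by (simp_all add: p lface_def rface_def)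
    ultimately show ?thesis
      unfolding inside_parity_def using traversals_sym[of W p q] 6 p by auto
  qed
qed

definition steps_along :: "face set \<Rightarrow> vtx list \<Rightarrow> bool" where
  "steps_along S ws \<longleftrightarrow> (\<forall>st\<in>set (walk_steps ws). \<exists>f\<in>S. fst st \<in> face_verts f \<and> snd st \<in> face_verts f)"

lemma steps_along_join:
  "xs \<noteq> [] \<Longrightarrow> ys \<noteq> [] \<Longrightarrow> last xs = hd ys \<Longrightarrow> steps_along S xs \<Longrightarrow> steps_along S ys \<Longrightarrow>
    steps_along S (xs @ tl ys)"
  unfolding steps_along_def by (auto simp: walk_steps_join)

lemma steps_along_face: "f \<in> S \<Longrightarrow> set ws \<subseteq> face_verts f \<Longrightarrow> steps_along S ws"
  unfolding steps_along_def using walk_steps_mem by blast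

lemma walk_between_in_cycle:
  assumes "walk_between c c cyc" "s \<in> set cyc" "t \<in> set cyc"
  obtains ws where "walk_between s t ws" "set ws \<subseteq> set cyc"
proof -
  have cyc: "cyc \<noteq> []" "hd cyc = c" "last cyc = c" "walk_adj cyc"
    using assms(1) unfolding walk_between_def by auto
  obtain i where i: "i < length cyc" "cyc ! i = s" using assms(2) by (metis in_set_conv_nth)
  obtain j where j: "j < length cyc" "cyc ! j = t" using assms(3) by (metis in_set_conv_nth)
  have "walk_between s c (drop i cyc)"
    unfolding walk_between_def using i cyc walk_adj_drop by (simp add: hd_drop_conv_nth)
  moreover have "walk_between c t (take (Suc j) cyc)"
  proof -
    have "hd (take (Suc j) cyc) = c" using cyc by (cases cyc) auto
    moreover have "last (take (Suc j) cyc) = t" using j by (simp add: take_Suc_conv_app_nth)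
    ultimately show ?thesis
      unfolding walk_between_def using cyc walk_adj_take[OF cyc(4)] by simp
  qed
  moreover have "set (drop i cyc @ tl (take (Suc j) cyc)) \<subseteq> set cyc"
    by (cases cyc) (auto dest: in_set_takeD in_set_dropD)
  ultimately show thesis
    using that walk_between_join by blast
qed

lemma face_boundary_walk:
  assumes "f \<in> Faces" "s \<in> face_verts f" "t \<in> face_verts f"
  obtains ws where "walk_between s t ws" "set ws \<subseteq> face_verts f"
proof -
  obtain x r where f: "f = (x, r)" by (cases f)
  have "even (x + r)" using assms(1) f by (simp add: Faces_def)
  then have parities: "even (x + 2 + r)" "odd (x + 1 + r)" "even (x + 1 + (r + 1))" "odd (x + (r + 1))"
    "odd (x + 2 + (r + 1))" by presburger+
  define cyc where "cyc = [(x, r), (x + 1, r), (x + 2, r), (x + 2, r + 1), (x + 1, r + 1), (x, r + 1), (x, r)]"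
  have "bw_adj (x, r) (x + 1, r)" "bw_adj (x + 1, r) (x + 2, r)" "bw_adj (x + 2, r) (x + 2, r + 1)"
    "bw_adj (x + 2, r + 1) (x + 1, r + 1)" "bw_adj (x + 1, r + 1) (x, r + 1)" "bw_adj (x, r + 1) (x, r)"
    using \<open>even (x + r)\<close> parities by (simp_all add: bw_adj_iff)
  then have "walk_between (x, r) (x, r) cyc"
    by (simp add: cyc_def walk_between_def walk_adj_def)
  moreover have "set cyc = face_verts f" unfolding cyc_def f face_verts_def by auto
  ultimately obtain ws where "walk_between s t ws" "set ws \<subseteq> set cyc"
    using walk_between_in_cycle assms(2,3) by metis
  then show thesis using that \<open>set cyc = face_verts f\<close> by blast
qed

lemma two_le_card_ex_distinct:
  assumes "2 \<le> card A"
  shows "\<exists>a\<in>A. \<exists>b\<in>A. a \<noteq> b"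
proof -
  have "finite A" using assms by (metis card.infinite not_numeral_le_zero)
  with assms show ?thesis using card_le_Suc0_iff_eq by fastforce
qed

lemma face_chain_walk:
  assumes "(g, h) \<in> (Restr {(h, k). face_adj h k} S)\<^sup>*" "S \<subseteq> Faces" "g \<in> S" "s \<in> face_verts g"
    "t \<in> face_verts h"
  obtains ws where "walk_between s t ws" "steps_along S ws"
proof -
  have "\<forall>t \<in> face_verts h. \<exists>ws. walk_between s t ws \<and> steps_along S ws"
    using assms(1)
  proof (induction rule: rtrancl_induct)
    case base
    show ?case
    proof
      fix t assume t: "t \<in> face_verts g"
      have "g \<in> Faces" using assms(2,3) by blast
      then obtain ws where "walk_between s t ws" "set ws \<subseteq> face_verts g"
        using face_boundary_walk[OF _ assms(4) t] by blast
      then show "\<exists>ws. walk_between s t ws \<and> steps_along S ws"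
        using steps_along_face[OF assms(3)] by blast
    qed
  next
    case (step y z)
    have yz: "y \<in> S" "z \<in> S" "face_adj y z" using step(2) by auto
    then have "2 \<le> card (face_verts y \<inter> face_verts z)" by (simp add: face_adj_def)
    then obtain m where m: "m \<in> face_verts y" "m \<in> face_verts z"
      using two_le_card_ex_distinct by blast
    have zF: "z \<in> Faces" using yz(2) assms(2) by blast
    show ?case
    proof
      fix t assume t: "t \<in> face_verts z"
      obtain ws1 where ws1: "walk_between s m ws1" "steps_along S ws1"
        using step(3) m(1) by blast
      obtain ws2 where ws2: "walk_between m t ws2" "set ws2 \<subseteq> face_verts z"
        using face_boundary_walk[OF zF m(2) t] by blast
      have "steps_along S (ws1 @ tl ws2)"
        using ws1 ws2 steps_along_join steps_along_face[OF yz(2) ws2(2)] unfolding walk_between_def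
        by simp
      then show "\<exists>ws. walk_between s t ws \<and> steps_along S ws"
        using walk_between_join[OF ws1(1) ws2(1)] by blast
    qed
  qed
  then show thesis using that assms(5) by blast
qed

lemma traversals_zero_off_faces:
  assumes "steps_along S W" "S \<subseteq> Faces" "bw_adj s t" "lface s t \<notin> S" "rface s t \<notin> S"
  shows "traversals W s t = 0"
proof (rule traversals_zero)
  fix st assume "st \<in> set (walk_steps W)"
  then obtain h where "h \<in> S" "fst st \<in> face_verts h" "snd st \<in> face_verts h"
    using assms(1) unfolding steps_along_def by blast
  then show "st \<noteq> (s, t) \<and> st \<noteq> (t, s)"
    using edge_faces_iff[OF assms(3), of h] assms(2,4,5) by auto
qed

lemma inside_parity_across_edge:
  assumes "closed_walk W" "bw_adj s t" "{y, z} = {lface s t, rface s t}" "traversals W s t = 0"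
  shows "inside_parity W y = inside_parity W z"
  using inside_parity_edge[OF assms(1,2)] assms(3,4) by (auto simp: doubleton_eq_iff)

lemma inside_parity_at_vertex:
  assumes W: "closed_walk W" and "Bad \<subseteq> Faces"
    and steps: "\<forall>st\<in>set (walk_steps W). (fst st \<in> T \<and> snd st \<in> T) \<or>
      (\<exists>\<Phi>\<in>Bad. fst st \<in> face_verts \<Phi> \<and> snd st \<in> face_verts \<Phi>)"
    and "w \<notin> T" and h: "h1 \<in> faces_at w" "h2 \<in> faces_at w" "h1 \<notin> Bad" "h2 \<notin> Bad"
  shows "inside_parity W h1 = inside_parity W h2"
proof (cases "h1 = h2")
  case False
  obtain z where z: "bw_adj w z" "{h1, h2} = {lface w z, rface w z}"
    using two_faces_at_edge[OF h(1,2) False] by blast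
  have "traversals W w z = 0"
  proof (rule traversals_zero)
    fix st assume st: "st \<in> set (walk_steps W)"
    show "st \<noteq> (w, z) \<and> st \<noteq> (z, w)"
    proof (rule ccontr)
      assume "\<not> ?thesis"
      then obtain \<Phi> where "\<Phi> \<in> Bad" "w \<in> face_verts \<Phi>" "z \<in> face_verts \<Phi>"
        using steps st \<open>w \<notin> T\<close> by auto
      then show False
        using edge_faces_iff[OF z(1), of \<Phi>] z(2) h(3,4) \<open>Bad \<subseteq> Faces\<close> by (auto simp: doubleton_eq_iff)
    qed
  qed
  then show ?thesis using inside_parity_across_edge[OF W z] by simp
qed simp

lemma inside_parity_along_path:
  assumes W: "closed_walk W" "Bad \<subseteq> Faces"
    "\<forall>st\<in>set (walk_steps W). (fst st \<in> T \<and> snd st \<in> T) \<or>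
      (\<exists>\<Phi>\<in>Bad. fst st \<in> face_verts \<Phi> \<and> snd st \<in> face_verts \<Phi>)"
    and ps: "ps \<noteq> []" "set ps \<inter> T = {}" "steps_along (Faces - Bad) ps"
    and h: "h1 \<in> faces_at (hd ps) - Bad" "h2 \<in> faces_at (last ps) - Bad"
  shows "inside_parity W h1 = inside_parity W h2"
  using ps h
proof (induction ps arbitrary: h1 rule: walk_steps.induct)
  case (1 x y zs)
  obtain h where h: "h \<in> Faces - Bad" "x \<in> face_verts h" "y \<in> face_verts h"
    using "1.prems"(3) unfolding steps_along_def by auto
  then have "h \<in> faces_at x - Bad" "h \<in> faces_at y - Bad" by (auto simp: faces_at_def)
  moreover have "x \<notin> T" using "1.prems"(2) by auto
  ultimately have "inside_parity W h1 = inside_parity W h"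
    using inside_parity_at_vertex[OF W] "1.prems"(4) by simp
  also have "\<dots> = inside_parity W h2"
    using "1.IH" "1.prems" \<open>h \<in> faces_at y - Bad\<close> by (auto simp: steps_along_def)
  finally show ?case .
next
  case ("2_2" v)
  then show ?case using inside_parity_at_vertex[OF W] by simp
qed simp

section \<open>The exploration process\<close>

lemma next_step_eq:
  assumes uv: "bw_adj u v" and c: "c (lface u v)" "\<not> c (rface u v)"
  shows "(THE w. bw_adj v w \<and> w \<noteq> u \<and> c (left_face v w) \<and> \<not> c (right_face v w)) =
         (if c (third_face u v) then turn_right u v else turn_left u v)"
proof (rule the_equality)
  show "bw_adj v (if c (third_face u v) then turn_right u v else turn_left u v) \<and>
      (if c (third_face u v) then turn_right u v else turn_left u v) \<noteq> u \<and>
      c (left_face v (if c (third_face u v) then turn_right u v else turn_left u v)) \<and>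
      \<not> c (right_face v (if c (third_face u v) then turn_right u v else turn_left u v))"
    using c turn_facts[OF uv] by (auto simp: left_face_eq right_face_eq)
next
  fix w assume w: "bw_adj v w \<and> w \<noteq> u \<and> c (left_face v w) \<and> \<not> c (right_face v w)"
  then have "w = turn_left u v \<or> w = turn_right u v" using turn_nbrs_iff[OF uv] by blast
  then show "w = (if c (third_face u v) then turn_right u v else turn_left u v)"
    using w c turn_facts[OF uv] by (auto simp: left_face_eq right_face_eq)
qed

text \<open>Going around the three faces at a, the colour changes exactly twice.\<close>

lemma first_step_unique:
  assumes "\<exists>f\<in>faces_at a. c f" "\<exists>f\<in>faces_at a. \<not> c f"
  shows "\<exists>!w. bw_adj a w \<and> c (left_face a w) \<and> \<not> c (right_face a w)"
proof -
  define u where "u = (fst a + 1, snd a)"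
  have au: "bw_adj a u" using bw_adj_iff[of "fst a" "snd a" u] unfolding u_def by simp
  then have ua: "bw_adj u a" by (rule bw_adj_sym)
  let ?L = "lface u a" and ?R = "rface u a" and ?F = "third_face u a"
  have nbrs: "bw_adj a w \<longleftrightarrow> w = u \<or> w = turn_left u a \<or> w = turn_right u a" for w
    using turn_nbrs_iff[OF ua, of w] au turn_adj[OF ua] by auto
  have not_const: "\<not> (c ?L \<and> c ?R \<and> c ?F)" "\<not> (\<not> c ?L \<and> \<not> c ?R \<and> \<not> c ?F)"
    using assms faces_at_turn[OF ua] by auto
  define P where "P w \<longleftrightarrow> bw_adj a w \<and> c (left_face a w) \<and> \<not> c (right_face a w)" for w
  have Pu: "P u \<longleftrightarrow> c ?R \<and> \<not> c ?L"
    unfolding P_def using au lface_reverse[OF ua] rface_reverse[OF ua] by (simp add: left_face_eq right_face_eq)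
  have PL: "P (turn_left u a) \<longleftrightarrow> c ?L \<and> \<not> c ?F"
    unfolding P_def using turn_facts[OF ua] by (simp add: left_face_eq right_face_eq)
  have PR: "P (turn_right u a) \<longleftrightarrow> c ?F \<and> \<not> c ?R"
    unfolding P_def using turn_facts[OF ua] by (simp add: left_face_eq right_face_eq)
  have P_nbr: "P w \<Longrightarrow> w = u \<or> w = turn_left u a \<or> w = turn_right u a" for w
    unfolding P_def using nbrs by blast
  have distinct: "u \<noteq> turn_left u a" "u \<noteq> turn_right u a" "turn_left u a \<noteq> turn_right u a"
    using turn_adj[OF ua] turn_left_neq_right[OF ua] by auto
  consider "P u" "\<not> P (turn_left u a)" "\<not> P (turn_right u a)"
    | "P (turn_left u a)" "\<not> P u" "\<not> P (turn_right u a)"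
    | "P (turn_right u a)" "\<not> P u" "\<not> P (turn_left u a)"
    using Pu PL PR not_const by blast
  then have "\<exists>!w. P w" using P_nbr distinct by cases metis+
  then show ?thesis unfolding P_def .
qed

lemma explore_edge_coloured:
  assumes "\<exists>f\<in>faces_at a. c f" "\<exists>f\<in>faces_at a. \<not> c f"
  shows "bw_adj (explore c a n) (explore c a (Suc n)) \<and> c (lface (explore c a n) (explore c a (Suc n))) \<and>
         \<not> c (rface (explore c a n) (explore c a (Suc n)))"
proof (induction n)
  case 0
  have "bw_adj a (explore c a 1) \<and> c (left_face a (explore c a 1)) \<and> \<not> c (right_face a (explore c a 1))"
    using theI'[OF first_step_unique[OF assms]] by simp
  then show ?case by (auto simp: left_face_eq right_face_eq)
next
  case (Suc n)
  let ?u = "explore c a n" and ?v = "explore c a (Suc n)"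
  have uv: "bw_adj ?u ?v" using Suc by simp
  have "explore c a (Suc (Suc n)) = (if c (third_face ?u ?v) then turn_right ?u ?v else turn_left ?u ?v)"
    using next_step_eq[of ?u ?v c] Suc by (simp add: Let_def)
  then show ?case using turn_facts[OF uv] Suc by auto
qed

lemma explore_turn:
  assumes "\<exists>f\<in>faces_at a. c f" "\<exists>f\<in>faces_at a. \<not> c f"
  shows "explore c a (Suc (Suc n)) =
    (let u = explore c a n; v = explore c a (Suc n) in if c (third_face u v) then turn_right u v else turn_left u v)"
  using next_step_eq[of "explore c a n" "explore c a (Suc n)" c] explore_edge_coloured[OF assms, of n]
  by (simp add: Let_def)

lemma step_choice_cong:
  assumes "\<forall>f\<in>faces_at v. c f = c' f"
  shows "(bw_adj v w \<and> c (left_face v w) \<and> \<not> c (right_face v w)) \<longleftrightarrow>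
    (bw_adj v w \<and> c' (left_face v w) \<and> \<not> c' (right_face v w))"
  using assms lface_at_ends[of v w] rface_at_ends[of v w] by (auto simp: left_face_eq right_face_eq)

lemma explore_cong_faces:
  assumes agree: "\<forall>i<m. \<forall>f\<in>faces_at (explore c a i). c f = c' f"
  shows "k \<le> m \<Longrightarrow> explore c a k = explore c' a k"
proof (induction k rule: less_induct)
  case (less k)
  consider "k = 0" | "k = Suc 0" | n where "k = Suc (Suc n)" by (metis not0_implies_Suc)
  then show ?case
  proof cases
    case 2
    then have "0 < m" using less.prems by simp
    then have "\<forall>f\<in>faces_at a. c f = c' f" using agree by (metis explore.simps(1))
    then show ?thesis using 2 step_choice_cong[of a c c'] by simp
  next
    case 3
    let ?u = "explore c a n" and ?v = "explore c a (Suc n)"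
    have "Suc n < m" using less.prems 3 by simp
    then have "\<forall>f\<in>faces_at ?v. c f = c' f" using agree by blast
    then have "(\<lambda>w. bw_adj ?v w \<and> w \<noteq> ?u \<and> c (left_face ?v w) \<and> \<not> c (right_face ?v w)) =
        (\<lambda>w. bw_adj ?v w \<and> w \<noteq> ?u \<and> c' (left_face ?v w) \<and> \<not> c' (right_face ?v w))"
      using step_choice_cong[of ?v c c'] by blast
    moreover have "?u = explore c' a n" "?v = explore c' a (Suc n)" using less 3 by simp_all
    ultimately show ?thesis using 3 by (simp add: Let_def)
  qed simp
qed

lemma lattice_path_D_edge: "lattice_path_in D ps \<Longrightarrow> st \<in> set (walk_steps ps) \<Longrightarrow> D_edge D (fst st) (snd st)"
  unfolding lattice_path_in_def walk_steps_nth by auto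

lemma lattice_path_walk_adj: "lattice_path_in D ps \<Longrightarrow> walk_adj ps"
  unfolding lattice_path_in_def walk_adj_nth D_edge_def by auto

lemma lattice_path_steps_along: "lattice_path_in D ps \<Longrightarrow> steps_along D ps"
  using lattice_path_D_edge unfolding steps_along_def D_edge_def by blast

lemma lattice_path_drop: "lattice_path_in D xs \<Longrightarrow> k < length xs \<Longrightarrow> lattice_path_in D (drop k xs)"
  unfolding lattice_path_in_def by auto

lemma lattice_path_take: "lattice_path_in D xs \<Longrightarrow> 0 < k \<Longrightarrow> lattice_path_in D (take k xs)"
  unfolding lattice_path_in_def by auto

text \<open>Every edge has two faces, so one of them differs from \<Phi>.\<close>

lemma lattice_path_steps_along_other:
  assumes "lattice_path_in D ps"
  shows "steps_along (Faces - {\<Phi>}) ps"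
  unfolding steps_along_def
proof
  fix st assume "st \<in> set (walk_steps ps)"
  then have st: "bw_adj (fst st) (snd st)" using lattice_path_D_edge[OF assms(1)] by (simp add: D_edge_def)
  then have "lface (fst st) (snd st) \<noteq> rface (fst st) (snd st)" by (rule lface_neq_rface)
  then obtain h where "h \<in> {lface (fst st) (snd st), rface (fst st) (snd st)}" "h \<noteq> \<Phi>" by blast
  moreover have "h \<in> Faces \<and> fst st \<in> face_verts h \<and> snd st \<in> face_verts h"
    if "h = lface (fst st) (snd st) \<or> h = rface (fst st) (snd st)" for h
    using edge_faces_iff[OF st, of h] that by blast
  ultimately show "\<exists>h\<in>Faces - {\<Phi>}. fst st \<in> face_verts h \<and> snd st \<in> face_verts h" by blast
qed

lemma lattice_path_last_adj:
  assumes "lattice_path_in D (ys @ [u, v])"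
  shows "bw_adj u v"
proof -
  have "Suc (length ys) < length (ys @ [u, v])" by simp
  then have "D_edge D ((ys @ [u, v]) ! length ys) ((ys @ [u, v]) ! Suc (length ys))"
    using assms unfolding lattice_path_in_def by blast
  moreover have "(ys @ [u, v]) ! length ys = u" "(ys @ [u, v]) ! Suc (length ys) = v"
    by (simp_all add: nth_append)
  ultimately show ?thesis by (simp add: D_edge_def)
qed

definition path_avoiding :: "face set \<Rightarrow> vtx set \<Rightarrow> vtx \<Rightarrow> vtx \<Rightarrow> vtx list \<Rightarrow> bool" where
  "path_avoiding D T x b ps \<longleftrightarrow> ps \<noteq> [] \<and> hd ps = x \<and> last ps = b \<and> lattice_path_in D ps \<and> set ps \<inter> T = {}"

lemma simple_path_split:
  assumes "simple_path_from_to D a b (g @ x # rest)" "g \<noteq> []"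
  shows "path_avoiding D (set g) x b (x # rest)" "distinct (g @ [x])" "lattice_path_in D (g @ [x])"
proof -
  have p: "lattice_path_in D (g @ x # rest)" "distinct (g @ x # rest)" "last (g @ x # rest) = b"
    using assms(1) unfolding simple_path_from_to_def by auto
  have "lattice_path_in D (drop (length g) (g @ x # rest))"
    using lattice_path_drop[OF p(1), of "length g"] by simp
  then show "path_avoiding D (set g) x b (x # rest)"
    using p(2,3) unfolding path_avoiding_def by auto
  show "distinct (g @ [x])" using p(2) by auto
  have "lattice_path_in D (take (Suc (length g)) (g @ x # rest))"
    using lattice_path_take[OF p(1)] by blast
  then show "lattice_path_in D (g @ [x])" by simp
qed

section \<open>Separation by closed walks\<close>

text \<open>A closed walk traversing the edge uv once separates its two faces, so they cannot both be
  joined to a common face at b by paths that avoid the walk.\<close>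

lemma separating_walk_blocks:
  assumes W: "closed_walk W" "Bad \<subseteq> Faces"
    "\<forall>st\<in>set (walk_steps W). (fst st \<in> T \<and> snd st \<in> T) \<or>
      (\<exists>\<Phi>\<in>Bad. fst st \<in> face_verts \<Phi> \<and> snd st \<in> face_verts \<Phi>)"
    and uv: "bw_adj u v" "traversals W u v = 1" "lface u v \<notin> Bad" "rface u v \<notin> Bad"
    and ps1: "ps1 \<noteq> []" "hd ps1 = turn_left u v" "last ps1 = b" "set ps1 \<inter> T = {}"
      "steps_along (Faces - Bad) ps1"
    and ps2: "ps2 \<noteq> []" "hd ps2 = turn_right u v" "last ps2 = b" "set ps2 \<inter> T = {}"
      "steps_along (Faces - Bad) ps2"
    and hb: "hb \<in> faces_at b - Bad"
  shows False
proof -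
  have "lface u v \<in> faces_at (hd ps1) - Bad"
    using ps1(2) uv(3) lface_at_ends[OF turn_adj(1)[OF uv(1)]] lface_turn_left[OF uv(1)] by simp
  then have "inside_parity W (lface u v) = inside_parity W hb"
    using inside_parity_along_path[OF W ps1(1,4,5)] hb ps1(3) by simp
  moreover have "rface u v \<in> faces_at (hd ps2) - Bad"
    using ps2(2) uv(4) rface_at_ends[OF turn_adj(2)[OF uv(1)]] rface_turn_right[OF uv(1)] by simp
  then have "inside_parity W (rface u v) = inside_parity W hb"
    using inside_parity_along_path[OF W ps2(1,4,5)] hb ps2(3) by simp
  ultimately show False
    using inside_parity_edge[OF W(1) uv(1)] uv(2) by simp
qed

text \<open>If the path g = ys @ [u, V] could be continued to b both by turning left and by turning right
  at V, then no earlier vertex of g lies on the third face F at V: otherwise g from that vertex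
  on, closed up around F, would separate the two faces of the edge uV.\<close>

lemma third_face_avoids_path:
  assumes hb: "hb \<in> faces_at b" "hb \<notin> D"
    and g: "distinct (ys @ [u, V])" "lattice_path_in D (ys @ [u, V])"
    and F: "third_face u V \<in> D"
    and ps1: "path_avoiding D (set (ys @ [u, V])) (turn_left u V) b ps1"
    and ps2: "path_avoiding D (set (ys @ [u, V])) (turn_right u V) b ps2"
  shows "x \<in> set (ys @ [u]) \<Longrightarrow> x \<notin> face_verts (third_face u V)"
proof
  let ?g = "ys @ [u, V]" and ?F = "third_face u V"
  assume x: "x \<in> set (ys @ [u])" "x \<in> face_verts ?F"
  have uV: "bw_adj u V" using lattice_path_last_adj[OF g(2)] .
  obtain k where k: "k < length (ys @ [u])" "(ys @ [u]) ! k = x" using x(1) by (metis in_set_conv_nth)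
  define A where "A = drop k ?g"
  have A_eq: "A = drop k ys @ [u, V]" unfolding A_def using k(1) by simp
  have "hd A = ?g ! k" unfolding A_def by (rule hd_drop_conv_nth) (use k(1) in simp)
  also have "\<dots> = x" using k nth_append[of "ys @ [u]" "[V]" k] by simp
  finally have A: "walk_between x V A"
    unfolding walk_between_def using k(1) walk_adj_drop[OF lattice_path_walk_adj[OF g(2)], of k]
    by (simp add: A_def)
  have "V \<in> face_verts ?F" using faces_at_turn[OF uV] by (auto simp: faces_at_def)
  then obtain arc where arc: "walk_between V x arc" "set arc \<subseteq> face_verts ?F"
    using face_boundary_walk third_face_in_Faces[OF uV] x(2) by metis
  define W where "W = A @ tl arc"
  have arc_ne: "A \<noteq> []" "arc \<noteq> []" "last A = hd arc" using A arc unfolding walk_between_def by auto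
  have W: "closed_walk W" unfolding W_def using closed_walk_join[OF A arc(1)] .
  have steps: "set (walk_steps W) = set (walk_steps A) \<union> set (walk_steps arc)"
    unfolding W_def using walk_steps_join[OF arc_ne] by simp
  have "traversals arc u V = 0"
    using arc(2) third_face_avoids_tail[OF uV] by (intro traversals_zero) (auto dest: walk_steps_mem)
  moreover have "traversals A u V = 1"
  proof -
    have "distinct A" unfolding A_def by (rule distinct_drop[OF g(1)])
    then have "distinct (drop k ys @ [u, V])" unfolding A_eq .
    then show ?thesis unfolding A_eq by (rule traversals_last)
  qed
  ultimately have "traversals W u V = 1"
    unfolding W_def using traversals_join[OF arc_ne] by simp
  moreover have "\<forall>st\<in>set (walk_steps W). (fst st \<in> set ?g \<and> snd st \<in> set ?g) \<or>
      (\<exists>\<Phi>\<in>{?F}. fst st \<in> face_verts \<Phi> \<and> snd st \<in> face_verts \<Phi>)"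
    using steps walk_steps_drop_subset[of k ?g] arc(2) walk_steps_mem unfolding A_def by blast
  moreover have "steps_along (Faces - {?F}) ps1" "steps_along (Faces - {?F}) ps2"
    using ps1 ps2 lattice_path_steps_along_other unfolding path_avoiding_def by blast+
  moreover have "hb \<in> faces_at b - {?F}" using hb F by auto
  ultimately show False
    using separating_walk_blocks[OF W _ _ uV, of "{?F}" "set ?g" ps1 b ps2 hb] ps1 ps2
      third_face_in_Faces[OF uV] third_face_neq_lface[OF uV] third_face_neq_rface[OF uV]
    unfolding path_avoiding_def by auto
qed

text \<open>Similarly the third face G at V' after the short edge VV' lies in D: otherwise V' is
  joined to a by a walk along faces outside D, and g closed up by that walk separates the two
  faces of VV', which are in D since V is interior.\<close>

lemma third_face_in_domain:
  assumes D: "D \<subseteq> Faces" "face_connected (Faces - D)"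
    and ha: "ha \<in> faces_at a" "ha \<notin> D" and hb: "hb \<in> faces_at b" "hb \<in> D"
    and g: "distinct (ys @ [V, V'])" "lattice_path_in D (ys @ [V, V'])" "hd (ys @ [V, V']) = a"
    and V: "faces_at V \<subseteq> D"
    and ps1: "path_avoiding D (set (ys @ [V, V'])) (turn_left V V') b ps1"
    and ps2: "path_avoiding D (set (ys @ [V, V'])) (turn_right V V') b ps2"
  shows "third_face V V' \<in> D"
proof (rule ccontr)
  let ?g = "ys @ [V, V']" and ?G = "third_face V V'"
  assume "?G \<notin> D"
  have VV': "bw_adj V V'" using lattice_path_last_adj[OF g(2)] .
  have G: "?G \<in> Faces - D" using third_face_in_Faces[OF VV'] \<open>?G \<notin> D\<close> by blast
  have "ha \<in> Faces - D" using ha by (auto simp: faces_at_def)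
  then have "(?G, ha) \<in> (Restr {(h, k). face_adj h k} (Faces - D))\<^sup>*"
    using D(2) G unfolding face_connected_def by blast
  moreover have "V' \<in> face_verts ?G" "a \<in> face_verts ha"
    using faces_at_turn[OF VV'] ha(1) by (auto simp: faces_at_def)
  ultimately obtain cw where cw: "walk_between V' a cw" "steps_along (Faces - D) cw"
    using face_chain_walk[OF _ Diff_subset G] by blast
  have g_walk: "walk_between a V' ?g"
    unfolding walk_between_def using g(3) lattice_path_walk_adj[OF g(2)] by simp
  define W where "W = ?g @ tl cw"
  have ne: "?g \<noteq> []" "cw \<noteq> []" "last ?g = hd cw" using cw unfolding walk_between_def by auto
  have W: "closed_walk W" unfolding W_def using closed_walk_join[OF g_walk cw(1)] .
  have faces_VV': "lface V V' \<in> D" "rface V V' \<in> D"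
    using lface_at_ends[OF VV'] rface_at_ends[OF VV'] V by auto
  have "traversals cw V V' = 0"
    using traversals_zero_off_faces[OF cw(2) Diff_subset VV'] faces_VV' by blast
  then have "traversals W V V' = 1"
    unfolding W_def using traversals_join[OF ne] traversals_last[OF g(1)] by simp
  moreover have "\<forall>st\<in>set (walk_steps W). (fst st \<in> set ?g \<and> snd st \<in> set ?g) \<or>
      (\<exists>\<Phi>\<in>Faces - D. fst st \<in> face_verts \<Phi> \<and> snd st \<in> face_verts \<Phi>)"
  proof
    fix st assume "st \<in> set (walk_steps W)"
    then have "st \<in> set (walk_steps ?g) \<or> st \<in> set (walk_steps cw)"
      using walk_steps_join[OF ne] unfolding W_def by simp
    then show "(fst st \<in> set ?g \<and> snd st \<in> set ?g) \<or>
        (\<exists>\<Phi>\<in>Faces - D. fst st \<in> face_verts \<Phi> \<and> snd st \<in> face_verts \<Phi>)"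
      using walk_steps_mem cw(2) unfolding steps_along_def by blast
  qed
  moreover have "Faces - (Faces - D) = D" using D(1) by blast
  then have "steps_along (Faces - (Faces - D)) ps1" "steps_along (Faces - (Faces - D)) ps2"
    using ps1 ps2 lattice_path_steps_along unfolding path_avoiding_def by simp_all
  moreover have "hb \<in> faces_at b - (Faces - D)" using hb by simp
  ultimately show False
    using separating_walk_blocks[OF W Diff_subset[of Faces D] _ VV', of "set ?g" ps1 b ps2 hb] ps1 ps2 faces_VV'
    unfolding path_avoiding_def by blast
qed

definition short_nbr :: "vtx \<Rightarrow> vtx" where
  "short_nbr v = (if even (fst v) then (fst v + 1, snd v) else (fst v - 1, snd v))"

lemma bw_short_iff: "bw_short p q \<longleftrightarrow> q = short_nbr p"
  by (cases p; cases q) (auto simp: bw_short_def short_nbr_def abs_if split: if_splits; presburger)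

lemma bw_short_adj: "bw_short p q \<Longrightarrow> bw_adj p q"
  by (auto simp: bw_short_def bw_adj_def)

lemma Vprime_eq: "Vprime v = short_nbr v"
  unfolding Vprime_def using bw_short_adj bw_short_iff by (intro the_equality) blast+

lemma Vprime_adj: "bw_adj v (Vprime v)"
  using bw_short_adj bw_short_iff Vprime_eq by metis

lemma Vprime_horizontal: "fst (Vprime v) \<noteq> fst v"
  by (auto simp: Vprime_eq short_nbr_def)

lemma vertical_nbr_unique: "\<exists>!w. bw_adj v w \<and> fst w = fst v"
proof -
  obtain x r where v: "v = (x, r)" by (cases v)
  show ?thesis unfolding v
    by (rule ex1I[of _ "(x, if even (x + r) then r + 1 else r - 1)"]) (auto simp: bw_adj_iff)
qed

lemma P_of_Vprime_turns:
  assumes uV: "bw_adj u V" and long: "\<not> bw_short u V"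
  shows "{P_of u V, Vprime V} = {turn_left u V, turn_right u V}" "P_of u V \<noteq> Vprime V"
proof -
  have "Vprime V \<noteq> u"
    using long bw_short_iff[of V u] bw_short_iff[of u V] Vprime_eq
    by (metis bw_short_def abs_minus_commute min.commute)
  then have V': "Vprime V = turn_left u V \<or> Vprime V = turn_right u V"
    using turn_nbrs_iff[OF uV] Vprime_adj by blast
  define P where "P = (if Vprime V = turn_left u V then turn_right u V else turn_left u V)"
  have P: "bw_adj V P" "P \<noteq> u" "P \<noteq> Vprime V"
    unfolding P_def using turn_adj[OF uV] turn_left_neq_right[OF uV] V' by auto
  have "P_of u V = P"
    unfolding P_of_def
  proof (rule the_equality)
    fix w assume w: "bw_adj V w \<and> w \<noteq> u \<and> w \<noteq> Vprime V"
    then have "w = turn_left u V \<or> w = turn_right u V" using turn_nbrs_iff[OF uV] by blast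
    then show "w = P" using w V' unfolding P_def by auto
  qed (use P in simp)
  then show "{P_of u V, Vprime V} = {turn_left u V, turn_right u V}" "P_of u V \<noteq> Vprime V"
    using P(3) V' unfolding P_def by auto
qed

text \<open>Of the two edges leaving V' other than V'V, one is vertical and one is horizontal.\<close>

lemma Q_of_R_of_turns:
  "{Q_of u V, R_of u V} = {turn_left V (Vprime V), turn_right V (Vprime V)}" "Q_of u V \<noteq> R_of u V"
proof -
  let ?V' = "Vprime V"
  have VV': "bw_adj V ?V'" by (rule Vprime_adj)
  obtain wv where wv: "bw_adj ?V' wv" "fst wv = fst ?V'"
    and wv_unique: "\<And>w. bw_adj ?V' w \<Longrightarrow> fst w = fst ?V' \<Longrightarrow> w = wv"
    using vertical_nbr_unique[of ?V'] by metis
  have "wv \<noteq> V" using wv(2) Vprime_horizontal[of V] by auto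
  then have wv_turn: "wv = turn_left V ?V' \<or> wv = turn_right V ?V'"
    using turn_nbrs_iff[OF VV'] wv(1) by blast
  define wh where "wh = (if wv = turn_left V ?V' then turn_right V ?V' else turn_left V ?V')"
  have wh: "bw_adj ?V' wh" "wh \<noteq> V" "wh \<noteq> wv"
    unfolding wh_def using turn_adj[OF VV'] turn_left_neq_right[OF VV'] wv_turn by auto
  have wh_horizontal: "fst wh \<noteq> fst ?V'" using wv_unique[OF wh(1)] wh(3) by auto
  have turns: "{wv, wh} = {turn_left V ?V', turn_right V ?V'}"
    unfolding wh_def using wv_turn turn_left_neq_right[OF VV'] by auto
  have nbrs: "bw_adj ?V' w \<and> w \<noteq> V \<Longrightarrow> w = wv \<or> w = wh" for w
    using turn_nbrs_iff[OF VV'] turns by blast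
  have R: "R_of u V = (if edge_vertical u V then wv else wh)"
    unfolding R_of_def
  proof (rule the_equality)
    fix w assume w: "bw_adj ?V' w \<and> w \<noteq> V \<and> (edge_vertical ?V' w \<longleftrightarrow> edge_vertical u V)"
    then have "w = wv \<or> w = wh" using nbrs by blast
    then show "w = (if edge_vertical u V then wv else wh)"
      using w wv wh_horizontal by (auto simp: edge_vertical_def)
  qed (use wv wh \<open>wv \<noteq> V\<close> wh_horizontal in \<open>auto simp: edge_vertical_def\<close>)
  have Q: "Q_of u V = (if edge_vertical u V then wh else wv)"
    unfolding Q_of_def
  proof (rule the_equality)
    fix w assume w: "bw_adj ?V' w \<and> w \<noteq> V \<and> (edge_vertical ?V' w \<longleftrightarrow> \<not> edge_vertical u V)"
    then have "w = wv \<or> w = wh" using nbrs by blast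
    then show "w = (if edge_vertical u V then wh else wv)"
      using w wv wh_horizontal by (auto simp: edge_vertical_def)
  qed (use wv wh \<open>wv \<noteq> V\<close> wh_horizontal in \<open>auto simp: edge_vertical_def\<close>)
  show "{Q_of u V, R_of u V} = {turn_left V ?V', turn_right V ?V'}" "Q_of u V \<noteq> R_of u V"
    using Q R turns wh(3) by (auto simp: insert_commute)
qed

lemma leaves_unblocked_facts:
  assumes "leaves_unblocked D a b (ys @ [u, V])"
  shows "hd (ys @ [u, V]) = a" "distinct (ys @ [u, V])" "lattice_path_in D (ys @ [u, V])"
    "faces_at V \<subseteq> D" "\<not> bw_short u V"
    "distinct (ys @ [u, V, Vprime V])" "lattice_path_in D (ys @ [u, V, Vprime V])"
    "\<exists>ps. path_avoiding D (set (ys @ [u, V])) (P_of u V) b ps"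
    "\<exists>ps. path_avoiding D (set (ys @ [u, V])) (Vprime V) b ps"
    "\<exists>ps. path_avoiding D (set (ys @ [u, V, Vprime V])) (Q_of u V) b ps"
    "\<exists>ps. path_avoiding D (set (ys @ [u, V, Vprime V])) (R_of u V) b ps"
proof -
  let ?g = "ys @ [u, V]"
  have last: "last ?g = V" "last (butlast ?g) = u" by (simp_all add: butlast_append)
  note L = assms[unfolded leaves_unblocked_def last Let_def]
  show "hd ?g = a" "distinct ?g" "lattice_path_in D ?g" "\<not> bw_short u V" using L by simp_all
  show "faces_at V \<subseteq> D" using L by (simp add: interior_vertex_def)
  obtain rP where "simple_path_from_to D a b (?g @ P_of u V # rP)" using L by auto
  then show "\<exists>ps. path_avoiding D (set ?g) (P_of u V) b ps"
    using simple_path_split(1)[of D a b ?g] by blast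
  obtain rQ where Q: "simple_path_from_to D a b ((ys @ [u, V, Vprime V]) @ Q_of u V # rQ)" using L by auto
  then show "\<exists>ps. path_avoiding D (set (ys @ [u, V, Vprime V])) (Q_of u V) b ps"
    using simple_path_split(1)[of D a b "ys @ [u, V, Vprime V]"] by blast
  have QV: "simple_path_from_to D a b (?g @ Vprime V # Q_of u V # rQ)" using Q by simp
  then show "\<exists>ps. path_avoiding D (set ?g) (Vprime V) b ps"
    using simple_path_split(1)[of D a b ?g] by blast
  show "distinct (ys @ [u, V, Vprime V])" "lattice_path_in D (ys @ [u, V, Vprime V])"
    using simple_path_split(2,3)[OF QV] by simp_all
  obtain rR where "simple_path_from_to D a b ((ys @ [u, V, Vprime V]) @ R_of u V # rR)" using L by auto
  then show "\<exists>ps. path_avoiding D (set (ys @ [u, V, Vprime V])) (R_of u V) b ps"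
    using simple_path_split(1)[of D a b "ys @ [u, V, Vprime V]"] by blast
qed

text \<open>The third faces met in the next one or two steps are hexagons of D whose colours the path
  has not seen yet.\<close>

lemma unblocked_third_face:
  assumes hb: "hb \<in> faces_at b" "hb \<notin> D"
    and L: "leaves_unblocked D a b (ys @ [u, V])"
  shows "third_face u V \<in> D" "x \<in> set (ys @ [u]) \<Longrightarrow> x \<notin> face_verts (third_face u V)"
proof -
  note facts = leaves_unblocked_facts[OF L]
  have uV: "bw_adj u V" using lattice_path_last_adj[OF facts(3)] .
  show F: "third_face u V \<in> D" using facts(4) faces_at_turn[OF uV] by auto
  obtain psP psV where "path_avoiding D (set (ys @ [u, V])) (P_of u V) b psP"
    "path_avoiding D (set (ys @ [u, V])) (Vprime V) b psV"
    using facts(8,9) by blast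
  moreover have "{P_of u V, Vprime V} = {turn_left u V, turn_right u V}"
    using P_of_Vprime_turns(1)[OF uV facts(5)] .
  ultimately obtain ps1 ps2 where "path_avoiding D (set (ys @ [u, V])) (turn_left u V) b ps1"
    "path_avoiding D (set (ys @ [u, V])) (turn_right u V) b ps2"
    by (auto simp: doubleton_eq_iff)
  then show "x \<in> set (ys @ [u]) \<Longrightarrow> x \<notin> face_verts (third_face u V)"
    using third_face_avoids_path[OF hb facts(2,3) F] by blast
qed

lemma unblocked_next_third_face:
  assumes D: "D \<subseteq> Faces" "face_connected (Faces - D)"
    and ha: "ha \<in> faces_at a" "ha \<notin> D" and hb: "hb \<in> faces_at b" "hb \<notin> D"
    and hbD: "hb' \<in> faces_at b" "hb' \<in> D"
    and L: "leaves_unblocked D a b (ys @ [u, V])"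
  shows "third_face V (Vprime V) \<in> D"
    "x \<in> set (ys @ [u, V]) \<Longrightarrow> x \<notin> face_verts (third_face V (Vprime V))"
proof -
  note facts = leaves_unblocked_facts[OF L]
  obtain psQ psR where "path_avoiding D (set (ys @ [u, V, Vprime V])) (Q_of u V) b psQ"
    "path_avoiding D (set (ys @ [u, V, Vprime V])) (R_of u V) b psR"
    using facts(10,11) by blast
  then obtain ps1 ps2 where
    ps: "path_avoiding D (set ((ys @ [u]) @ [V, Vprime V])) (turn_left V (Vprime V)) b ps1"
      "path_avoiding D (set ((ys @ [u]) @ [V, Vprime V])) (turn_right V (Vprime V)) b ps2"
    using Q_of_R_of_turns(1)[of u V] by (auto simp: doubleton_eq_iff)
  have g: "distinct ((ys @ [u]) @ [V, Vprime V])" "lattice_path_in D ((ys @ [u]) @ [V, Vprime V])"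
    "hd ((ys @ [u]) @ [V, Vprime V]) = a"
    using facts(1,6,7) by (cases ys; simp)+
  show G: "third_face V (Vprime V) \<in> D"
    using third_face_in_domain[OF D ha hbD g facts(4) ps] .
  show "x \<in> set (ys @ [u, V]) \<Longrightarrow> x \<notin> face_verts (third_face V (Vprime V))"
    using third_face_avoids_path[OF hb g(1,2) G ps] by simp
qed

section \<open>Flipping the colour of a fresh hexagon\<close>

lemma card_eq_double_if_involution:
  assumes "finite S" "\<forall>x\<in>S. s x \<in> S" "\<forall>x\<in>S. s (s x) = x" "\<forall>x\<in>S. E (s x) \<longleftrightarrow> \<not> E x"
  shows "card S = 2 * card {x\<in>S. E x}"
proof -
  let ?A = "{x\<in>S. E x}" and ?B = "{x\<in>S. \<not> E x}"
  have "inj_on s ?A" using assms(3) by (metis (mono_tags, lifting) inj_onI mem_Collect_eq)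
  moreover have "s ` ?A = ?B"
  proof
    show "s ` ?A \<subseteq> ?B" using assms(2,4) by auto
    show "?B \<subseteq> s ` ?A"
    proof
      fix y assume "y \<in> ?B"
      then have "s y \<in> ?A" "s (s y) = y" using assms(2-4) by auto
      then show "y \<in> s ` ?A" by (metis image_eqI)
    qed
  qed
  ultimately have "card ?A = card ?B" by (metis card_image)
  moreover have "card S = card ?A + card ?B"
  proof -
    have "S = ?A \<union> ?B" "?A \<inter> ?B = {}" "finite ?A" "finite ?B" using assms(1) by auto
    then show ?thesis by (metis card_Un_disjoint)
  qed
  ultimately show ?thesis by simp
qed

lemma card_eq_double_by_flip:
  assumes "finite S" "\<forall>\<omega>\<in>S. \<forall>v. \<omega>(\<Phi> \<omega> := v) \<in> S \<and> \<Phi> (\<omega>(\<Phi> \<omega> := v)) = \<Phi> \<omega>"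
    "\<forall>\<omega>\<in>S. E (\<omega>(\<Phi> \<omega> := \<not> \<omega> (\<Phi> \<omega>))) \<longleftrightarrow> \<not> E \<omega>"
  shows "card S = 2 * card {\<omega>\<in>S. E \<omega>}"
  by (rule card_eq_double_if_involution[where s = "\<lambda>\<omega>. \<omega>(\<Phi> \<omega> := \<not> \<omega> (\<Phi> \<omega>))"]) (use assms in auto)

lemma colouring_update: "F \<in> D \<Longrightarrow> colouring D bc (\<omega>(F := v)) = (colouring D bc \<omega>)(F := v)"
  by (intro ext) (auto simp: colouring_def)

lemma configs_update: "\<omega> \<in> configs D \<Longrightarrow> F \<in> D \<Longrightarrow> \<omega>(F := v) \<in> configs D"
  using PiE_fun_upd[of v "\<lambda>_. UNIV" F \<omega> D] by (simp add: configs_def insert_absorb)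

lemma if_swap_eq_iff: "p \<in> {x, y} \<Longrightarrow> x \<noteq> y \<Longrightarrow> (if b then y else x) = p \<longleftrightarrow> \<not> (if b then x else y) = p"
  by auto

locale exploration =
  fixes D :: "face set" and bc :: "face \<Rightarrow> bool" and a b :: vtx and j :: nat
  assumes domain: "lattice_domain D" and boundary: "boundary_condition D bc a b"
begin

definition X :: "(face \<Rightarrow> bool) \<Rightarrow> nat \<Rightarrow> vtx" where
  "X \<omega> = explore (colouring D bc \<omega>) a"

definition unblocked :: "(face \<Rightarrow> bool) set" where
  "unblocked = {\<omega> \<in> configs D. unblocked_at D a b (colouring D bc \<omega>) j}"

definition prev :: "(face \<Rightarrow> bool) \<Rightarrow> vtx" where "prev \<omega> = X \<omega> (j - 1)"
definition V :: "(face \<Rightarrow> bool) \<Rightarrow> vtx" where "V \<omega> = X \<omega> j"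
definition F :: "(face \<Rightarrow> bool) \<Rightarrow> face" where "F \<omega> = third_face (prev \<omega>) (V \<omega>)"
definition G :: "(face \<Rightarrow> bool) \<Rightarrow> face" where "G \<omega> = third_face (V \<omega>) (Vprime (V \<omega>))"

lemma start_colours: "\<exists>f\<in>faces_at a. colouring D bc \<omega> f" "\<exists>f\<in>faces_at a. \<not> colouring D bc \<omega> f"
  using boundary unfolding boundary_condition_def bdry_faces_def colouring_def by fastforce+

lemma finite_unblocked: "finite unblocked"
proof -
  have "finite (configs D)" using domain unfolding configs_def lattice_domain_def by (auto intro!: finite_PiE)
  then show ?thesis unfolding unblocked_def by simp
qed

lemma unblocked_facts:
  assumes "\<omega> \<in> unblocked"
  shows "0 < j" "bw_adj (prev \<omega>) (V \<omega>)" "\<not> bw_short (prev \<omega>) (V \<omega>)"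
    "F \<omega> \<in> D" "k < j \<Longrightarrow> F \<omega> \<notin> faces_at (X \<omega> k)"
    "G \<omega> \<in> D" "k \<le> j \<Longrightarrow> G \<omega> \<notin> faces_at (X \<omega> k)"
proof -
  have L: "leaves_unblocked D a b (map (X \<omega>) [0..<Suc j])"
    using assms unfolding unblocked_def unblocked_at_def X_def by simp
  then obtain i where i: "j = Suc i" by (cases j) (auto simp: leaves_unblocked_def)
  then show "0 < j" by simp
  have prev_V: "prev \<omega> = X \<omega> i" "V \<omega> = X \<omega> (Suc i)" unfolding prev_def V_def using i by simp_all
  then have path: "map (X \<omega>) [0..<Suc j] = map (X \<omega>) [0..<i] @ [prev \<omega>, V \<omega>]"
    using i by simp
  note L = L[unfolded path]
  note facts = leaves_unblocked_facts[OF L]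
  show uV: "bw_adj (prev \<omega>) (V \<omega>)" using lattice_path_last_adj[OF facts(3)] .
  show "\<not> bw_short (prev \<omega>) (V \<omega>)" using facts(5) .
  have D: "D \<subseteq> Faces" "face_connected (Faces - D)" using domain by (auto simp: lattice_domain_def)
  obtain hb where hb: "hb \<in> faces_at b" "hb \<notin> D"
    using boundary unfolding boundary_condition_def bdry_faces_def by blast
  obtain hb' where hb': "hb' \<in> faces_at b" "hb' \<in> D"
    using boundary unfolding boundary_condition_def by blast
  obtain ha where ha: "ha \<in> faces_at a" "ha \<notin> D"
    using boundary unfolding boundary_condition_def bdry_faces_def by blast
  show "F \<omega> \<in> D" unfolding F_def using unblocked_third_face(1)[OF hb L] .
  show "G \<omega> \<in> D" unfolding G_def using unblocked_next_third_face(1)[OF D ha hb hb' L] .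
  show "F \<omega> \<notin> faces_at (X \<omega> k)" if "k < j"
  proof -
    have "X \<omega> k \<in> set (map (X \<omega>) [0..<i] @ [prev \<omega>])" using that i prev_V by (cases "k = i") auto
    then show ?thesis using unblocked_third_face(2)[OF hb L] by (auto simp: F_def faces_at_def)
  qed
  show "G \<omega> \<notin> faces_at (X \<omega> k)" if "k \<le> j"
  proof -
    have "X \<omega> k \<in> set (map (X \<omega>) [0..<i] @ [prev \<omega>, V \<omega>])"
      using that i prev_V by (cases "k = Suc i"; cases "k = i") auto
    then show ?thesis using unblocked_next_third_face(2)[OF D ha hb hb' L] by (auto simp: G_def faces_at_def)
  qed
qed

lemma X_update_fresh:
  assumes "\<Phi> \<in> D" "\<forall>k<m. \<Phi> \<notin> faces_at (X \<omega> k)" "k \<le> m"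
  shows "X (\<omega>(\<Phi> := v)) k = X \<omega> k"
  using explore_cong_faces[of m "colouring D bc \<omega>" a "colouring D bc (\<omega>(\<Phi> := v))" k] assms
  unfolding X_def colouring_update[OF assms(1)] by auto

lemma unblocked_update_fresh:
  assumes "\<omega> \<in> unblocked" "\<Phi> \<in> D" "\<forall>k<j. \<Phi> \<notin> faces_at (X \<omega> k)"
  shows "\<omega>(\<Phi> := v) \<in> unblocked"
proof -
  have "map (explore (colouring D bc (\<omega>(\<Phi> := v))) a) [0..<Suc j] = map (explore (colouring D bc \<omega>) a) [0..<Suc j]"
    using X_update_fresh[OF assms(2,3)] unfolding X_def by (intro map_cong) auto
  then have "unblocked_at D a b (colouring D bc (\<omega>(\<Phi> := v))) j = unblocked_at D a b (colouring D bc \<omega>) j"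
    unfolding unblocked_at_def by (simp only:)
  then have "unblocked_at D a b (colouring D bc (\<omega>(\<Phi> := v))) j"
    using assms(1) unfolding unblocked_def by simp
  then show ?thesis
    using assms(1) configs_update[OF _ assms(2)] unfolding unblocked_def by simp
qed

lemma X_Suc_j:
  assumes "\<omega> \<in> unblocked"
  shows "X \<omega> (Suc j) = (if \<omega> (F \<omega>) then turn_right (prev \<omega>) (V \<omega>) else turn_left (prev \<omega>) (V \<omega>))"
proof -
  obtain i where i: "j = Suc i" using unblocked_facts(1)[OF assms] by (cases j) auto
  have "colouring D bc \<omega> (F \<omega>) = \<omega> (F \<omega>)"
    using unblocked_facts(4)[OF assms] by (simp add: colouring_def)
  then show ?thesis
    using explore_turn[OF start_colours, of \<omega> i] i unfolding X_def F_def prev_def V_def by (simp add: Let_def)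
qed

lemma X_Suc_Suc_j:
  assumes "\<omega> \<in> unblocked" "X \<omega> (Suc j) = Vprime (V \<omega>)"
  shows "X \<omega> (Suc (Suc j)) =
    (if \<omega> (G \<omega>) then turn_right (V \<omega>) (Vprime (V \<omega>)) else turn_left (V \<omega>) (Vprime (V \<omega>)))"
proof -
  have "colouring D bc \<omega> (G \<omega>) = \<omega> (G \<omega>)"
    using unblocked_facts(6)[OF assms(1)] by (simp add: colouring_def)
  then show ?thesis
    using explore_turn[OF start_colours, of \<omega> j] assms(2) unfolding X_def G_def V_def by (simp add: Let_def)
qed

lemma cond_prob_unblocked:
  "cond_prob_unif (configs D) E (\<lambda>\<omega>. unblocked_at D a b (colouring D bc \<omega>) j) =
    card {\<omega>\<in>unblocked. E \<omega>} / card unblocked"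
proof -
  have "{\<omega> \<in> configs D. E \<omega> \<and> unblocked_at D a b (colouring D bc \<omega>) j} = {\<omega>\<in>unblocked. E \<omega>}"
    by (auto simp: unblocked_def)
  then show ?thesis unfolding cond_prob_unif_def unblocked_def[symmetric] by simp
qed

text \<open>Flipping the colour of F keeps the path up to V and swaps the two possible next steps.\<close>

lemma card_unblocked_turn:
  assumes T: "\<And>u v. bw_adj u v \<Longrightarrow> \<not> bw_short u v \<Longrightarrow> T u v \<in> {turn_left u v, turn_right u v}"
  shows "card unblocked = 2 * card {\<omega>\<in>unblocked. X \<omega> (Suc j) = T (prev \<omega>) (V \<omega>)}"
proof (rule card_eq_double_by_flip[OF finite_unblocked, where \<Phi> = F])
  let ?E = "\<lambda>\<omega>. X \<omega> (Suc j) = T (prev \<omega>) (V \<omega>)"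
  have flip: "\<omega>(F \<omega> := v) \<in> unblocked \<and> prev (\<omega>(F \<omega> := v)) = prev \<omega> \<and> V (\<omega>(F \<omega> := v)) = V \<omega>"
    if "\<omega> \<in> unblocked" for \<omega> v
    using unblocked_update_fresh[OF that] X_update_fresh[of "F \<omega>" j \<omega>] unblocked_facts[OF that]
    unfolding prev_def V_def by simp
  then show "\<forall>\<omega>\<in>unblocked. \<forall>v. \<omega>(F \<omega> := v) \<in> unblocked \<and> F (\<omega>(F \<omega> := v)) = F \<omega>"
    unfolding F_def by simp
  show "\<forall>\<omega>\<in>unblocked. ?E (\<omega>(F \<omega> := \<not> \<omega> (F \<omega>))) \<longleftrightarrow> \<not> ?E \<omega>"
  proof
    fix \<omega> assume \<omega>: "\<omega> \<in> unblocked"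
    let ?\<omega>' = "\<omega>(F \<omega> := \<not> \<omega> (F \<omega>))"
    have "F ?\<omega>' = F \<omega>" using flip[OF \<omega>] unfolding F_def by simp
    then have "X ?\<omega>' (Suc j) = (if \<omega> (F \<omega>) then turn_left (prev \<omega>) (V \<omega>) else turn_right (prev \<omega>) (V \<omega>))"
      using X_Suc_j[of ?\<omega>'] flip[OF \<omega>] by simp
    then show "?E ?\<omega>' \<longleftrightarrow> \<not> ?E \<omega>"
      using X_Suc_j[OF \<omega>] flip[OF \<omega>] if_swap_eq_iff[OF T turn_left_neq_right] unblocked_facts(2,3)[OF \<omega>]
      by simp
  qed
qed

text \<open>Given the step to V', flipping the colour of G keeps the path up to V' and swaps the two
  possible steps after it.\<close>

lemma card_unblocked_Vprime_turn:
  assumes T: "\<And>u v. T u v \<in> {turn_left v (Vprime v), turn_right v (Vprime v)}"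
  defines "S \<equiv> {\<omega>\<in>unblocked. X \<omega> (Suc j) = Vprime (V \<omega>)}"
  shows "card S = 2 * card {\<omega>\<in>S. X \<omega> (Suc (Suc j)) = T (prev \<omega>) (V \<omega>)}"
proof (rule card_eq_double_by_flip[where \<Phi> = G])
  let ?E = "\<lambda>\<omega>. X \<omega> (Suc (Suc j)) = T (prev \<omega>) (V \<omega>)"
  show "finite S" unfolding S_def using finite_unblocked by simp
  have flip: "\<omega>(G \<omega> := v) \<in> S \<and> prev (\<omega>(G \<omega> := v)) = prev \<omega> \<and> V (\<omega>(G \<omega> := v)) = V \<omega>"
    if "\<omega> \<in> S" for \<omega> v
  proof -
    have \<omega>: "\<omega> \<in> unblocked" "X \<omega> (Suc j) = Vprime (V \<omega>)" using that unfolding S_def by simp_all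
    have fresh: "\<forall>k<Suc j. G \<omega> \<notin> faces_at (X \<omega> k)" using unblocked_facts(7)[OF \<omega>(1)] by simp
    have same: "X (\<omega>(G \<omega> := v)) k = X \<omega> k" if "k \<le> Suc j" for k
      using X_update_fresh[OF unblocked_facts(6)[OF \<omega>(1)] fresh that] .
    have "\<omega>(G \<omega> := v) \<in> unblocked"
      using unblocked_update_fresh[OF \<omega>(1) unblocked_facts(6)[OF \<omega>(1)]] fresh by simp
    moreover have "prev (\<omega>(G \<omega> := v)) = prev \<omega>" "V (\<omega>(G \<omega> := v)) = V \<omega>"
      unfolding prev_def V_def using same by simp_all
    ultimately show ?thesis using \<omega>(2) same[of "Suc j"] unfolding S_def by simp
  qed
  then show "\<forall>\<omega>\<in>S. \<forall>v. \<omega>(G \<omega> := v) \<in> S \<and> G (\<omega>(G \<omega> := v)) = G \<omega>"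
    unfolding G_def by simp
  show "\<forall>\<omega>\<in>S. ?E (\<omega>(G \<omega> := \<not> \<omega> (G \<omega>))) \<longleftrightarrow> \<not> ?E \<omega>"
  proof
    fix \<omega> assume \<omega>: "\<omega> \<in> S"
    let ?\<omega>' = "\<omega>(G \<omega> := \<not> \<omega> (G \<omega>))"
    have in_S: "\<omega> \<in> unblocked" "X \<omega> (Suc j) = Vprime (V \<omega>)"
      "?\<omega>' \<in> unblocked" "X ?\<omega>' (Suc j) = Vprime (V ?\<omega>')"
      using \<omega> flip[OF \<omega>] unfolding S_def by auto
    have "G ?\<omega>' = G \<omega>" using flip[OF \<omega>] unfolding G_def by simp
    then have "X ?\<omega>' (Suc (Suc j)) =
        (if \<omega> (G \<omega>) then turn_left (V \<omega>) (Vprime (V \<omega>)) else turn_right (V \<omega>) (Vprime (V \<omega>)))"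
      using X_Suc_Suc_j[OF in_S(3,4)] flip[OF \<omega>] by simp
    then show "?E ?\<omega>' \<longleftrightarrow> \<not> ?E \<omega>"
      using X_Suc_Suc_j[OF in_S(1,2)] flip[OF \<omega>] if_swap_eq_iff[OF T turn_left_neq_right[OF Vprime_adj]]
      by simp
  qed
qed

end

theorem lemma4p1:
  fixes D :: "face set" and bc :: "face \<Rightarrow> bool" and a b :: vtx and j :: nat
  assumes "lattice_domain D"
    and "boundary_condition D bc a b"
    and "\<exists>\<omega>\<in>configs D. unblocked_at D a b (colouring D bc \<omega>) j"
  shows
    "cond_prob_unif (configs D)
       (\<lambda>\<omega>. let X = explore (colouring D bc \<omega>) a in
               X (Suc j) = P_of (X (j - 1)) (X j))
       (\<lambda>\<omega>. unblocked_at D a b (colouring D bc \<omega>) j) = 1/2 \<and>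
     cond_prob_unif (configs D)
       (\<lambda>\<omega>. let X = explore (colouring D bc \<omega>) a in
               X (Suc j) = Vprime (X j) \<and> X (Suc (Suc j)) = Q_of (X (j - 1)) (X j))
       (\<lambda>\<omega>. unblocked_at D a b (colouring D bc \<omega>) j) = 1/4 \<and>
     cond_prob_unif (configs D)
       (\<lambda>\<omega>. let X = explore (colouring D bc \<omega>) a in
               X (Suc j) = Vprime (X j) \<and> X (Suc (Suc j)) = R_of (X (j - 1)) (X j))
       (\<lambda>\<omega>. unblocked_at D a b (colouring D bc \<omega>) j) = 1/4"
proof -
  interpret exploration D bc a b j using assms(1,2) by unfold_locales
  let ?S = "{\<omega>\<in>unblocked. X \<omega> (Suc j) = Vprime (V \<omega>)}"
  have "card unblocked > 0"
    using assms(3) finite_unblocked by (auto simp: unblocked_def card_gt_0_iff)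
  moreover have "card unblocked = 2 * card {\<omega>\<in>unblocked. X \<omega> (Suc j) = P_of (prev \<omega>) (V \<omega>)}"
    using card_unblocked_turn[of P_of] P_of_Vprime_turns(1) by blast
  moreover have "card unblocked = 2 * card ?S"
    using card_unblocked_turn[of "\<lambda>u v. Vprime v"] P_of_Vprime_turns(1) by blast
  moreover have "card ?S = 2 * card {\<omega>\<in>?S. X \<omega> (Suc (Suc j)) = Q_of (prev \<omega>) (V \<omega>)}"
    and "card ?S = 2 * card {\<omega>\<in>?S. X \<omega> (Suc (Suc j)) = R_of (prev \<omega>) (V \<omega>)}"
    using card_unblocked_Vprime_turn[of Q_of] card_unblocked_Vprime_turn[of R_of] Q_of_R_of_turns(1) by blast+
  ultimately show ?thesis
    unfolding cond_prob_unblocked Let_def X_def[symmetric] prev_def[symmetric] V_def[symmetric]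
    by (simp add: conj_assoc)
qed

end
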